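(* Let $d\ge3$ and let $\phi(x,t;y)=\langle x,y\rangle+\psi(t;y)$ be a translation-invariant phase on $\mathbb{B}^{d-1}_{\varepsilon_0}\times\mathbb{B}^1_{\varepsilon_0}\times\mathbb{B}^{d-1}_{\varepsilon_0}$ satisfying $(H_1),(H_2)$ and Bourgain's condition at every point. Then there exist smooth functions $c:(-\varepsilon_0,\varepsilon_0)\to\mathbb{R}$ and $\mathbf B:(-\varepsilon_0,\varepsilon_0)\to\mathbb{R}^{d-1}$ such that, with $T(x,t)=(x+\mathbf B(t),t)$, one has $\phi(T(x,t);y)=\langle x,y\rangle+\tilde\psi(t;y)$ where $\tilde\psi(t;y)=\mathbf B(t)\cdot y+\psi(t;y)$ satisfies $$\partial_t^2\nabla_y\tilde\psi(t;y)=c(t)\,\partial_t\nabla_y\tilde\psi(t;y)$$ for all $(t,y)\in(-\varepsilon_0,\varepsilon_0)\times\mathbb{B}^{d-1}_{\varepsilon_0}$.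
   Context: Coordinates: $\mathbf x=(x,t)\in\mathbb{B}^{d-1}_{\varepsilon_0}\times\mathbb{B}^1_{\varepsilon_0}$, $y\in\mathbb{B}^{d-1}_{\varepsilon_0}$, $\mathbb{B}^k_r$ the $k$-dimensional ball of radius $r$ centered at $0$, $\varepsilon_0>0$ small depending on $\phi$; $\phi$ is smooth. Hörmander's conditions: $(H_1)$ $\mathrm{rank}\,\nabla_{\mathbf x}\nabla_y\phi(\mathbf x;y)=d-1$ everywhere; $(H_2)$ with $G_0(\mathbf x;y)=\bigwedge_{j=1}^{d-1}\partial_{y_j}\nabla_{\mathbf x}\phi(\mathbf x;y)$ (identified with a vector of $\mathbb{R}^d$), one has $\det\nabla^2_y\langle\nabla_{\mathbf x}\phi(\mathbf x;y),G_0(\mathbf x;y_0)\rangle|_{y=y_0}\ne0$. Translation-invariant: $\phi(x,t;y)=\langle x,y\rangle+\psi(t;y)$ with $\psi$ smooth, $\psi(0;y)=0$. Bourgain's condition at $(\mathbf x_0;y_0)$: there is a scalar $C(\mathbf x_0;y_0)$ with $(G_0\cdot\nabla_{\mathbf x})^2\partial^2_{y_iy_j}\phi(\mathbf x_0;y_0)=C(\mathbf x_0;y_0)(G_0\cdot\nabla_{\mathbf x})\partial^2_{y_iy_j}\phi(\mathbf x_0;y_0)$ for all $i,j$, where $G_0=G_0(\mathbf x;y_0)$ is a vector field in $\mathbf x$. *)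

theory Defs
  imports "HOL-Analysis.Analysis"
begin

definition pd :: "('a::real_normed_vector \<Rightarrow> real) \<Rightarrow> 'a \<Rightarrow> 'a \<Rightarrow> real" where
  "pd f v x = deriv (\<lambda>s. f (x + s *\<^sub>R v)) 0"

fun iter_pd :: "('a::real_normed_vector \<Rightarrow> real) \<Rightarrow> 'a list \<Rightarrow> 'a \<Rightarrow> real" where
  "iter_pd f [] = f"
| "iter_pd f (v # vs) = pd (iter_pd f vs) v"

definition smooth_on :: "'a::euclidean_space set \<Rightarrow> ('a \<Rightarrow> real) \<Rightarrow> bool" where
  "smooth_on S f \<longleftrightarrow>
     (\<forall>vs. set vs \<subseteq> Basis \<longrightarrow>
        continuous_on S (iter_pd f vs) \<and>
        (\<forall>v\<in>Basis. \<forall>x\<in>S. (\<lambda>s. iter_pd f vs (x + s *\<^sub>R v)) differentiable (at 0)))"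

text \<open>Phases phi(X;y) with X in R^d (indexed by 'n option; None is the t-coordinate)
  and y in R^(d-1) (indexed by 'n).\<close>

definition mixed_hess :: "(real^'n option \<Rightarrow> real^'n \<Rightarrow> real) \<Rightarrow> real^'n option \<Rightarrow> real^'n
     \<Rightarrow> real^'n^('n::finite) option" where
  "mixed_hess \<phi> X y = (\<chi> k j. pd (\<lambda>X'. pd (\<lambda>y'. \<phi> X' y') (axis j 1) y) (axis k 1) X)"

definition gradX :: "(real^'n option \<Rightarrow> real^'n \<Rightarrow> real) \<Rightarrow> real^'n option \<Rightarrow> real^'n
     \<Rightarrow> real^('n::finite) option" where
  "gradX \<phi> X y = (\<chi> k. pd (\<lambda>X'. \<phi> X' y) (axis k 1) X)"

text \<open>Wedge product of the d-1 columns of a d x (d-1) matrix, identified with a vector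
  of R^d via  <v_1 ^ ... ^ v_{d-1}, w> = det(v_1,...,v_{d-1},w).\<close>
definition wedge_cols :: "real^'n^('n::finite) option \<Rightarrow> real^'n option" where
  "wedge_cols M = (\<chi> k. det (\<chi> r c. case c of Some j \<Rightarrow> M $ r $ j | None \<Rightarrow> axis k (1::real) $ r))"

definition G0 :: "(real^'n option \<Rightarrow> real^'n \<Rightarrow> real) \<Rightarrow> real^'n option \<Rightarrow> real^'n
     \<Rightarrow> real^('n::finite) option" where
  "G0 \<phi> X y = wedge_cols (mixed_hess \<phi> X y)"

definition H1 :: "(real^'n option \<Rightarrow> real^'n \<Rightarrow> real) \<Rightarrow> real^'n option \<Rightarrow> real^('n::finite) \<Rightarrow> bool" where
  "H1 \<phi> X y \<longleftrightarrow> rank (mixed_hess \<phi> X y) = CARD('n)"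

definition H2 :: "(real^'n option \<Rightarrow> real^'n \<Rightarrow> real) \<Rightarrow> real^'n option \<Rightarrow> real^('n::finite) \<Rightarrow> bool" where
  "H2 \<phi> X y0 \<longleftrightarrow>
     det (\<chi> i j. pd (\<lambda>y'. pd (\<lambda>y''. gradX \<phi> X y'' \<bullet> G0 \<phi> X y0) (axis j 1) y') (axis i 1) y0)
       \<noteq> (0::real)"

definition G0_deriv :: "(real^'n option \<Rightarrow> real^'n \<Rightarrow> real) \<Rightarrow> real^('n::finite)
     \<Rightarrow> (real^'n option \<Rightarrow> real) \<Rightarrow> real^'n option \<Rightarrow> real" where
  "G0_deriv \<phi> y0 g X = (\<Sum>k\<in>UNIV. G0 \<phi> X y0 $ k * pd g (axis k 1) X)"

definition bourgain_cond :: "(real^'n option \<Rightarrow> real^'n \<Rightarrow> real) \<Rightarrow> real^'n option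
     \<Rightarrow> real^('n::finite) \<Rightarrow> bool" where
  "bourgain_cond \<phi> X0 y0 \<longleftrightarrow>
     (\<exists>C::real. \<forall>i j.
        let f = (\<lambda>X. pd (\<lambda>y'. pd (\<lambda>y''. \<phi> X y'') (axis j 1) y') (axis i 1) y0) in
        G0_deriv \<phi> y0 (G0_deriv \<phi> y0 f) X0 = C * G0_deriv \<phi> y0 f X0)"

definition xt :: "real^'n \<Rightarrow> real \<Rightarrow> real^('n::finite) option" where
  "xt x t = (\<chi> k. case k of None \<Rightarrow> t | Some j \<Rightarrow> x $ j)"

definition ti_phase :: "(real \<Rightarrow> real^'n \<Rightarrow> real) \<Rightarrow> real^'n option \<Rightarrow> real^('n::finite) \<Rightarrow> real" where
  "ti_phase \<psi> X y = (\<chi> j. X $ Some j) \<bullet> y + \<psi> (X $ None) y"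

end

theory Submission
  imports Defs
begin

(* For a translation-invariant phase the mixed Hessian is the identity on the x-block, so
  G0 has t-component 1 and the G0-derivative of a function of t alone is its t-derivative.
  Hence Bourgain's condition reads  d_t^2 Hess_y psi = C(t,y) d_t Hess_y psi, and (H2) says that
  d_t Hess_y psi is invertible. Differentiating the relation in y_k and using the symmetry of
  mixed partials gives  (d_k C) A_ij = (d_i C) A_kj  for A = d_t Hess_y psi; as there are at least
  two y-directions, a nonzero d_i C would make two rows of A proportional, so C = c(t).
  Then  d_t^2 grad_y psi - c(t) d_t grad_y psi  has zero y-gradient, i.e. equals some g(t), and a
  translation B(t) solving the linear ODE  B'' = c B' - g  absorbs it. *)

section \<open>Partial derivatives along lines\<close>

lemma eventually_line_in_open:
  fixes x v :: "'a::real_normed_vector"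
  assumes "open N" "x \<in> N"
  shows "\<forall>\<^sub>F s in nhds (0::real). x + s *\<^sub>R v \<in> N"
proof -
  have "((\<lambda>s::real. x + s *\<^sub>R v) \<longlongrightarrow> x + 0 *\<^sub>R v) (nhds 0)"
    by (intro tendsto_intros) (simp add: filterlim_ident)
  then show ?thesis using assms by (auto intro: topological_tendstoD)
qed

lemma pd_cong:
  assumes "open N" "x \<in> N" "\<And>z. z \<in> N \<Longrightarrow> f z = g z"
  shows "pd f v x = pd g v x"
  unfolding pd_def
  by (rule deriv_cong_ev) (auto intro: eventually_mono[OF eventually_line_in_open[OF assms(1,2)]] assms(3))

lemma has_field_derivative_pd:
  assumes "(\<lambda>s. f (x + s *\<^sub>R v)) differentiable (at 0)"
  shows "((\<lambda>s. f (x + s *\<^sub>R v)) has_field_derivative pd f v x) (at 0)"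
  using assms unfolding pd_def by (simp add: DERIV_deriv_iff_real_differentiable)

lemma has_field_derivative_along_line:
  fixes h :: "'a::real_normed_vector \<Rightarrow> real"
  assumes "((\<lambda>s. h ((x + r *\<^sub>R v) + s *\<^sub>R v)) has_real_derivative D) (at 0)"
  shows "((\<lambda>s. h (x + s *\<^sub>R v)) has_real_derivative D) (at r)"
proof -
  have "(\<lambda>s. h (x + (s + r) *\<^sub>R v)) = (\<lambda>s. h ((x + r *\<^sub>R v) + s *\<^sub>R v))"
    by (simp add: algebra_simps)
  then have "((\<lambda>s. h (x + (s + r) *\<^sub>R v)) has_real_derivative D) (at 0)"
    using assms by simp
  then show ?thesis using DERIV_shift[of "\<lambda>s. h (x + s *\<^sub>R v)" _ 0 r] by simp
qed

lemma differentiable_at_shift_0: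
  "(f::real \<Rightarrow> real) differentiable (at t) \<longleftrightarrow> (\<lambda>s. f (t + s)) differentiable (at 0)"
  unfolding real_differentiable_def using DERIV_shift[of f _ 0 t] by (simp add: add.commute)

lemma deriv_const_add: "deriv (\<lambda>s. c + g s) x = deriv g x"
proof -
  have "((\<lambda>s. c + g s) has_field_derivative D) (at x) \<longleftrightarrow> (g has_field_derivative D) (at x)" for D
    using DERIV_add[OF DERIV_const[of "-c"], of "\<lambda>s. c + g s" D x] DERIV_add[OF DERIV_const[of c], of g D x]
    by auto
  then show ?thesis unfolding deriv_def by simp
qed

lemma deriv_affine: "deriv (\<lambda>s::real. a + s * b) x = b"
  by (rule DERIV_imp_deriv) (auto intro!: derivative_eq_intros)

lemma deriv_affine_add:
  assumes "g differentiable (at 0)"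
  shows "deriv (\<lambda>s::real. a + s * b + g s) 0 = b + deriv g 0"
proof -
  have "(g has_field_derivative deriv g 0) (at 0)"
    using assms by (simp add: DERIV_deriv_iff_real_differentiable)
  then have "((\<lambda>s::real. a + s * b + g s) has_field_derivative b + deriv g 0) (at 0)"
    by (auto intro!: derivative_eq_intros)
  then show ?thesis by (rule DERIV_imp_deriv)
qed

lemma second_difference_eq_mixed_pd:
  fixes f :: "'a::real_normed_vector \<Rightarrow> real"
  assumes h: "h > 0"
    and square: "\<And>s s'. s \<in> {0..h} \<Longrightarrow> s' \<in> {0..h} \<Longrightarrow> x + s *\<^sub>R u + s' *\<^sub>R v \<in> S"
    and du: "\<forall>z\<in>S. (\<lambda>s. f (z + s *\<^sub>R u)) differentiable (at 0)"
    and duv: "\<forall>z\<in>S. (\<lambda>s. pd f u (z + s *\<^sub>R v)) differentiable (at 0)"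
  obtains \<xi> \<eta> where "\<xi> \<in> {0<..<h}" "\<eta> \<in> {0<..<h}"
    "f (x + h *\<^sub>R u + h *\<^sub>R v) - f (x + h *\<^sub>R u) - f (x + h *\<^sub>R v) + f x
       = h * h * pd (pd f u) v (x + \<xi> *\<^sub>R u + \<eta> *\<^sub>R v)"
proof -
  define pt where "pt s s' = x + s *\<^sub>R u + s' *\<^sub>R v" for s s'
  have line_u: "pt r s' = (x + s' *\<^sub>R v) + r *\<^sub>R u" for r s'
    by (simp add: pt_def algebra_simps)
  have line_v: "pt s r = (x + s *\<^sub>R u) + r *\<^sub>R v" for s r
    by (simp add: pt_def)
  have Du: "((\<lambda>s. f (pt s s')) has_real_derivative pd f u (pt s s')) (at s)"
    if "s \<in> {0..h}" "s' \<in> {0..h}" for s s'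
  proof -
    have "((\<lambda>r. f (pt s s' + r *\<^sub>R u)) has_real_derivative pd f u (pt s s')) (at 0)"
      by (rule has_field_derivative_pd) (use du square[OF that] in \<open>simp add: pt_def\<close>)
    then have "((\<lambda>r. f ((x + s' *\<^sub>R v + s *\<^sub>R u) + r *\<^sub>R u)) has_real_derivative pd f u (pt s s')) (at 0)"
      by (simp only: line_u)
    from has_field_derivative_along_line[OF this] show ?thesis by (simp only: line_u)
  qed
  have Dv: "((\<lambda>s'. pd f u (pt s s')) has_real_derivative pd (pd f u) v (pt s s')) (at s')"
    if "s \<in> {0..h}" "s' \<in> {0..h}" for s s'
  proof -
    have "((\<lambda>r. pd f u (pt s s' + r *\<^sub>R v)) has_real_derivative pd (pd f u) v (pt s s')) (at 0)"
      by (rule has_field_derivative_pd) (use duv square[OF that] in \<open>simp add: pt_def\<close>)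
    then have "((\<lambda>r. pd f u ((x + s *\<^sub>R u + s' *\<^sub>R v) + r *\<^sub>R v)) has_real_derivative
        pd (pd f u) v (pt s s')) (at 0)"
      by (simp only: line_v)
    from has_field_derivative_along_line[OF this] show ?thesis by (simp only: line_v)
  qed
  have d1: "((\<lambda>s. f (pt s h) - f (pt s 0)) has_real_derivative pd f u (pt s h) - pd f u (pt s 0)) (at s)"
    if "0 \<le> s" "s \<le> h" for s
    using that h by (intro DERIV_diff Du) auto
  obtain \<xi> where \<xi>: "0 < \<xi>" "\<xi> < h"
    "f (pt h h) - f (pt h 0) - (f (pt 0 h) - f (pt 0 0)) = (h - 0) * (pd f u (pt \<xi> h) - pd f u (pt \<xi> 0))"
    using MVT2[OF h d1] by blast
  have d2: "((\<lambda>s'. pd f u (pt \<xi> s')) has_real_derivative pd (pd f u) v (pt \<xi> s')) (at s')"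
    if "0 \<le> s'" "s' \<le> h" for s'
    using that \<xi> by (intro Dv) auto
  obtain \<eta> where \<eta>: "0 < \<eta>" "\<eta> < h"
    "pd f u (pt \<xi> h) - pd f u (pt \<xi> 0) = (h - 0) * pd (pd f u) v (pt \<xi> \<eta>)"
    using MVT2[OF h d2] by blast
  show ?thesis
    by (rule that[of \<xi> \<eta>]) (use \<xi> \<eta> in \<open>auto simp: pt_def algebra_simps\<close>)
qed

lemma exists_square_near:
  fixes x u v :: "'a::real_normed_vector"
  assumes R: "R > 0"
  obtains h where "h > 0" "\<And>s s'. s \<in> {0..h} \<Longrightarrow> s' \<in> {0..h} \<Longrightarrow> dist (x + s *\<^sub>R u + s' *\<^sub>R v) x < R"
proof -
  define a where "a = 2 * (norm u + norm v + 1)"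
  define h where "h = R / a"
  have a: "norm u + norm v < a" unfolding a_def by (smt (verit) norm_ge_zero)
  have h: "h > 0" unfolding h_def using R a by (smt (verit) divide_pos_pos norm_ge_zero)
  have "dist (x + s *\<^sub>R u + s' *\<^sub>R v) x < R" if "s \<in> {0..h}" "s' \<in> {0..h}" for s s'
  proof -
    have "norm (s *\<^sub>R u + s' *\<^sub>R v) \<le> h * norm u + h * norm v"
      using that by (intro order_trans[OF norm_triangle_ineq] add_mono) (auto intro: mult_right_mono)
    also have "\<dots> = h * (norm u + norm v)" by (simp add: algebra_simps)
    also have "\<dots> < h * a" by (rule mult_strict_left_mono[OF a h])
    also have "\<dots> = R"
      unfolding h_def using a by (smt (verit) norm_ge_zero nonzero_divide_eq_eq)
    finally show ?thesis by (simp add: dist_norm add.assoc)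
  qed
  with h show ?thesis by (rule that)
qed

lemma pd_pd_commute:
  fixes f :: "'a::real_normed_vector \<Rightarrow> real"
  assumes S: "open S" "x \<in> S"
    and du: "\<forall>z\<in>S. (\<lambda>s. f (z + s *\<^sub>R u)) differentiable (at 0)"
    and dv: "\<forall>z\<in>S. (\<lambda>s. f (z + s *\<^sub>R v)) differentiable (at 0)"
    and duv: "\<forall>z\<in>S. (\<lambda>s. pd f u (z + s *\<^sub>R v)) differentiable (at 0)"
    and dvu: "\<forall>z\<in>S. (\<lambda>s. pd f v (z + s *\<^sub>R u)) differentiable (at 0)"
    and cuv: "continuous_on S (pd (pd f u) v)"
    and cvu: "continuous_on S (pd (pd f v) u)"
  shows "pd (pd f u) v x = pd (pd f v) u x"
proof -
  define P where "P = pd (pd f u) v"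
  define Q where "Q = pd (pd f v) u"
  have small: "\<bar>P x - Q x\<bar> < \<delta>" if "\<delta> > 0" for \<delta>
  proof -
    obtain r0 where r0: "r0 > 0" "ball x r0 \<subseteq> S" using S openE by blast
    obtain r1 where r1: "r1 > 0" "\<forall>z\<in>S. dist z x < r1 \<longrightarrow> dist (P z) (P x) < \<delta>/2"
      using cuv S(2) \<open>\<delta> > 0\<close> unfolding continuous_on_iff P_def by (meson half_gt_zero)
    obtain r2 where r2: "r2 > 0" "\<forall>z\<in>S. dist z x < r2 \<longrightarrow> dist (Q z) (Q x) < \<delta>/2"
      using cvu S(2) \<open>\<delta> > 0\<close> unfolding continuous_on_iff Q_def by (meson half_gt_zero)
    define R where "R = min r0 (min r1 r2)"
    have "R > 0" using r0 r1 r2 unfolding R_def by auto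
    then obtain h where h: "h > 0"
      and near: "\<And>s s'. s \<in> {0..h} \<Longrightarrow> s' \<in> {0..h} \<Longrightarrow> dist (x + s *\<^sub>R u + s' *\<^sub>R v) x < R"
      using exists_square_near[where x = x and u = u and v = v] by blast
    have sq: "x + s *\<^sub>R u + s' *\<^sub>R v \<in> S" if "s \<in> {0..h}" "s' \<in> {0..h}" for s s'
      using near[OF that] r0 unfolding R_def by (auto simp: dist_commute)
    have sq': "x + s *\<^sub>R v + s' *\<^sub>R u \<in> S" if "s \<in> {0..h}" "s' \<in> {0..h}" for s s'
      using sq[OF that(2,1)] by (simp add: algebra_simps)
    obtain \<xi> \<eta> where \<xi>\<eta>: "\<xi> \<in> {0<..<h}" "\<eta> \<in> {0<..<h}"
      "f (x + h *\<^sub>R u + h *\<^sub>R v) - f (x + h *\<^sub>R u) - f (x + h *\<^sub>R v) + f x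
         = h * h * P (x + \<xi> *\<^sub>R u + \<eta> *\<^sub>R v)"
      using second_difference_eq_mixed_pd[OF h sq du duv] unfolding P_def by blast
    obtain \<xi>' \<eta>' where \<xi>'\<eta>': "\<xi>' \<in> {0<..<h}" "\<eta>' \<in> {0<..<h}"
      "f (x + h *\<^sub>R v + h *\<^sub>R u) - f (x + h *\<^sub>R v) - f (x + h *\<^sub>R u) + f x
         = h * h * Q (x + \<xi>' *\<^sub>R v + \<eta>' *\<^sub>R u)"
      using second_difference_eq_mixed_pd[OF h sq' dv dvu] unfolding Q_def by blast
    have "h * h * P (x + \<xi> *\<^sub>R u + \<eta> *\<^sub>R v) = h * h * Q (x + \<xi>' *\<^sub>R v + \<eta>' *\<^sub>R u)"
      using \<xi>\<eta>(3) \<xi>'\<eta>'(3) by (simp add: algebra_simps)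
    then have PQ: "P (x + \<xi> *\<^sub>R u + \<eta> *\<^sub>R v) = Q (x + \<eta>' *\<^sub>R u + \<xi>' *\<^sub>R v)"
      using h by (simp add: algebra_simps)
    have "dist (P (x + \<xi> *\<^sub>R u + \<eta> *\<^sub>R v)) (P x) < \<delta>/2"
      using r1 sq near[of \<xi> \<eta>] \<xi>\<eta> unfolding R_def by auto
    moreover have "dist (Q (x + \<eta>' *\<^sub>R u + \<xi>' *\<^sub>R v)) (Q x) < \<delta>/2"
      using r2 sq near[of \<eta>' \<xi>'] \<xi>'\<eta>' unfolding R_def by auto
    ultimately show ?thesis using PQ unfolding dist_real_def by linarith
  qed
  have "P x = Q x"
    using small[of "\<bar>P x - Q x\<bar>"] by fastforce
  then show ?thesis unfolding P_def Q_def .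
qed

lemma iter_pd_append: "iter_pd (iter_pd f L) vs = iter_pd f (vs @ L)"
  by (induction vs) auto

lemma smooth_on_iter_pd: "smooth_on S f \<Longrightarrow> set L \<subseteq> Basis \<Longrightarrow> smooth_on S (iter_pd f L)"
  unfolding smooth_on_def iter_pd_append by auto

lemma smooth_on_continuous_on_iter_pd:
  "smooth_on S f \<Longrightarrow> set L \<subseteq> Basis \<Longrightarrow> continuous_on S (iter_pd f L)"
  unfolding smooth_on_def by auto

lemma smooth_on_differentiable_along:
  "smooth_on S f \<Longrightarrow> set L \<subseteq> Basis \<Longrightarrow> v \<in> Basis \<Longrightarrow> x \<in> S \<Longrightarrow>
    (\<lambda>s. iter_pd f L (x + s *\<^sub>R v)) differentiable (at 0)"
  unfolding smooth_on_def by auto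

lemma smooth_on_has_derivative_along:
  "smooth_on S f \<Longrightarrow> set L \<subseteq> Basis \<Longrightarrow> v \<in> Basis \<Longrightarrow> x \<in> S \<Longrightarrow>
    ((\<lambda>s. iter_pd f L (x + s *\<^sub>R v)) has_real_derivative iter_pd f (v # L) x) (at 0)"
  using has_field_derivative_pd[OF smooth_on_differentiable_along] by simp

lemma smooth_on_iter_pd_swap:
  assumes "open S" "smooth_on S f" "set (L @ u # v # L') \<subseteq> Basis" "x \<in> S"
  shows "iter_pd f (L @ v # u # L') x = iter_pd f (L @ u # v # L') x"
  using assms(3,4)
proof (induction L arbitrary: x)
  case Nil
  have g: "smooth_on S (iter_pd f L')" using smooth_on_iter_pd[OF assms(2)] Nil by auto
  have uv: "u \<in> Basis" "v \<in> Basis" using Nil.prems(1) by auto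
  have d0: "\<forall>z\<in>S. (\<lambda>s. iter_pd f L' (z + s *\<^sub>R w)) differentiable at 0" if "w \<in> Basis" for w
    using smooth_on_differentiable_along[OF g, of "[]"] that by auto
  have d1: "\<forall>z\<in>S. (\<lambda>s. pd (iter_pd f L') w (z + s *\<^sub>R w')) differentiable at 0"
    if "w \<in> Basis" "w' \<in> Basis" for w w'
    using smooth_on_differentiable_along[OF g, of "[w]"] that by auto
  have c2: "continuous_on S (pd (pd (iter_pd f L') w) w')" if "w \<in> Basis" "w' \<in> Basis" for w w'
    using smooth_on_continuous_on_iter_pd[OF g, of "[w', w]"] that by auto
  have "pd (pd (iter_pd f L') u) v x = pd (pd (iter_pd f L') v) u x"
    using uv by (intro pd_pd_commute[OF assms(1) Nil.prems(2)] d0 d1 c2)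
  then show ?case by (simp add: iter_pd_append[symmetric])
next
  case (Cons w L)
  have "pd (iter_pd f (L @ v # u # L')) w x = pd (iter_pd f (L @ u # v # L')) w x"
    by (rule pd_cong[OF assms(1) Cons.prems(2)]) (use Cons in auto)
  then show ?case by simp
qed

lemma smooth_on_iter_pd_move_front:
  assumes "open S" "smooth_on S f" "set (L @ u # L') \<subseteq> Basis" "x \<in> S"
  shows "iter_pd f (L @ u # L') x = iter_pd f (u # L @ L') x"
  using assms(3)
proof (induction L arbitrary: L' rule: rev_induct)
  case (snoc w L)
  have "iter_pd f (L @ w # u # L') x = iter_pd f (L @ u # w # L') x"
    by (rule smooth_on_iter_pd_swap[OF assms(1,2) _ assms(4)]) (use snoc.prems in auto)
  also have "\<dots> = iter_pd f (u # L @ w # L') x"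
    using snoc.IH[of "w # L'"] snoc.prems by simp
  finally show ?case by simp
qed simp

section \<open>Infinitely differentiable functions of one variable\<close>

definition differentiable_upto :: "nat \<Rightarrow> real set \<Rightarrow> (real \<Rightarrow> real) \<Rightarrow> bool" where
  "differentiable_upto n I f \<longleftrightarrow> (\<forall>k\<le>n. \<forall>t\<in>I. (deriv ^^ k) f differentiable (at t))"

definition C_infinity_on :: "real set \<Rightarrow> (real \<Rightarrow> real) \<Rightarrow> bool" where
  "C_infinity_on I f \<longleftrightarrow> (\<forall>n. differentiable_upto n I f)"

lemma differentiable_upto_0: "differentiable_upto 0 I f \<longleftrightarrow> (\<forall>t\<in>I. f differentiable (at t))"
  unfolding differentiable_upto_def by auto

lemma differentiable_upto_Suc:
  "differentiable_upto (Suc n) I f \<longleftrightarrow>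
     (\<forall>t\<in>I. f differentiable (at t)) \<and> differentiable_upto n I (deriv f)"
proof -
  have e: "(deriv ^^ Suc k) f = (deriv ^^ k) (deriv f)" for k
    by (simp add: funpow_Suc_right del: funpow.simps)
  have q: "(\<forall>k\<le>Suc n. P k) \<longleftrightarrow> P 0 \<and> (\<forall>k\<le>n. P (Suc k))" for P
    by (metis Suc_le_mono le0 not0_implies_Suc)
  show ?thesis unfolding differentiable_upto_def q e funpow_0 by (rule refl)
qed

lemma differentiable_upto_mono:
  "m \<le> n \<Longrightarrow> differentiable_upto n I f \<Longrightarrow> differentiable_upto m I f"
  unfolding differentiable_upto_def by auto

lemma differentiable_upto_cong:
  assumes "open I" "\<And>t. t \<in> I \<Longrightarrow> f t = g t" "differentiable_upto n I f"
  shows "differentiable_upto n I g"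
  unfolding differentiable_upto_def
proof (intro allI impI ballI)
  fix k t assume k: "k \<le> n" and t: "t \<in> I"
  obtain d where d: "d > 0" "ball t d \<subseteq> I" using assms(1) t openE by blast
  have eq: "(deriv ^^ k) f x = (deriv ^^ k) g x" if "x \<in> I" for x
    by (rule higher_deriv_cong_ev)
      (use assms(1,2) that in \<open>auto intro: eventually_nhds_in_open eventually_mono\<close>)
  show "(deriv ^^ k) g differentiable at t"
  proof (rule differentiable_transform_within[of "(deriv ^^ k) f" _ _ d])
    show "(deriv ^^ k) f differentiable at t"
      using assms(3) k t unfolding differentiable_upto_def by auto
    show "(deriv ^^ k) f x' = (deriv ^^ k) g x'" if "dist x' t < d" for x'
      using that d eq by (auto simp: dist_commute)
  qed (use d in auto)
qed

lemma differentiable_upto_SucI: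
  assumes "open I" "\<And>t. t \<in> I \<Longrightarrow> (f has_real_derivative f' t) (at t)"
    "differentiable_upto n I f'"
  shows "differentiable_upto (Suc n) I f"
  unfolding differentiable_upto_Suc
proof
  show "\<forall>t\<in>I. f differentiable at t" using assms(2) real_differentiable_def by blast
  show "differentiable_upto n I (deriv f)"
    by (rule differentiable_upto_cong[OF assms(1) _ assms(3)]) (metis DERIV_imp_deriv assms(2))
qed

lemma differentiable_upto_Suc_has_derivative:
  assumes "differentiable_upto (Suc n) I f" "t \<in> I"
  shows "(f has_real_derivative deriv f t) (at t)"
  using assms unfolding differentiable_upto_Suc
  by (simp add: DERIV_deriv_iff_real_differentiable)

lemma differentiable_upto_const: "differentiable_upto n I (\<lambda>t. c)"
proof -
  have "(deriv ^^ k) (\<lambda>t. c) = (\<lambda>t. if k = 0 then c else 0)" for k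
    by (induction k) (auto intro!: ext DERIV_imp_deriv derivative_eq_intros)
  then show ?thesis unfolding differentiable_upto_def by simp
qed

lemma differentiable_upto_add:
  assumes "open I"
  shows "differentiable_upto n I f \<Longrightarrow> differentiable_upto n I g \<Longrightarrow>
    differentiable_upto n I (\<lambda>t. f t + g t)"
proof (induction n arbitrary: f g)
  case 0 then show ?case unfolding differentiable_upto_0 by auto
next
  case (Suc n)
  show ?case
  proof (rule differentiable_upto_SucI[OF assms])
    show "((\<lambda>t. f t + g t) has_real_derivative deriv f t + deriv g t) (at t)" if "t \<in> I" for t
      using Suc.prems that by (intro DERIV_add differentiable_upto_Suc_has_derivative)
    show "differentiable_upto n I (\<lambda>t. deriv f t + deriv g t)"
      using Suc by (simp add: differentiable_upto_Suc)
  qed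
qed

lemma differentiable_upto_mult:
  assumes "open I"
  shows "differentiable_upto n I f \<Longrightarrow> differentiable_upto n I g \<Longrightarrow>
    differentiable_upto n I (\<lambda>t. f t * g t)"
proof (induction n arbitrary: f g)
  case 0 then show ?case unfolding differentiable_upto_0 by auto
next
  case (Suc n)
  show ?case
  proof (rule differentiable_upto_SucI[OF assms])
    show "((\<lambda>t. f t * g t) has_real_derivative deriv f t * g t + f t * deriv g t) (at t)"
      if "t \<in> I" for t
      using DERIV_mult[OF differentiable_upto_Suc_has_derivative[OF Suc.prems(1) that]
          differentiable_upto_Suc_has_derivative[OF Suc.prems(2) that]]
      by (simp add: algebra_simps)
    have "differentiable_upto n I f" "differentiable_upto n I g"
      using Suc.prems differentiable_upto_mono[of n "Suc n"] by auto
    then show "differentiable_upto n I (\<lambda>t. deriv f t * g t + f t * deriv g t)"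
      using Suc by (intro differentiable_upto_add[OF assms]) (simp_all add: differentiable_upto_Suc)
  qed
qed

lemma differentiable_upto_inverse:
  assumes "open I" "\<And>t. t \<in> I \<Longrightarrow> f t \<noteq> 0"
  shows "differentiable_upto n I f \<Longrightarrow> differentiable_upto n I (\<lambda>t. inverse (f t))"
proof (induction n)
  case 0
  then show ?case unfolding differentiable_upto_0
    using DERIV_inverse_fun assms(2) real_differentiable_def by blast
next
  case (Suc n)
  show ?case
  proof (rule differentiable_upto_SucI[OF assms(1)])
    show "((\<lambda>t. inverse (f t)) has_real_derivative
            (-1) * (deriv f t * (inverse (f t) * inverse (f t)))) (at t)" if "t \<in> I" for t
      using DERIV_inverse_fun[OF differentiable_upto_Suc_has_derivative[OF Suc.prems that] assms(2)[OF that]]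
      by (simp add: power2_eq_square inverse_mult_distrib)
    have "differentiable_upto n I (\<lambda>t. inverse (f t))"
      using Suc differentiable_upto_mono[of n "Suc n"] by auto
    moreover have "differentiable_upto n I (deriv f)"
      using Suc.prems by (simp add: differentiable_upto_Suc)
    ultimately show "differentiable_upto n I (\<lambda>t. (-1) * (deriv f t * (inverse (f t) * inverse (f t))))"
      by (intro differentiable_upto_mult[OF assms(1)] differentiable_upto_const)
  qed
qed

lemma differentiable_upto_exp:
  assumes "open I" "C_infinity_on I g"
  shows "differentiable_upto n I (\<lambda>t. exp (g t))"
proof (induction n)
  case 0
  have "differentiable_upto 0 I g" using assms(2) C_infinity_on_def by blast
  then show ?case unfolding differentiable_upto_0 real_differentiable_def
    using DERIV_chain2[OF DERIV_exp] by blast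
next
  case (Suc n)
  show ?case
  proof (rule differentiable_upto_SucI[OF assms(1)])
    have "differentiable_upto (Suc 0) I g" using assms(2) C_infinity_on_def by blast
    then show "((\<lambda>t. exp (g t)) has_real_derivative exp (g t) * deriv g t) (at t)" if "t \<in> I" for t
      using DERIV_chain2[OF DERIV_exp differentiable_upto_Suc_has_derivative] that by blast
    have "differentiable_upto n I (deriv g)"
      using assms(2) unfolding C_infinity_on_def by (metis differentiable_upto_Suc)
    then show "differentiable_upto n I (\<lambda>t. exp (g t) * deriv g t)"
      by (intro differentiable_upto_mult[OF assms(1)] Suc)
  qed
qed

lemma C_infinity_on_cong:
  assumes "open I" "\<And>t. t \<in> I \<Longrightarrow> f t = g t" "C_infinity_on I f"
  shows "C_infinity_on I g"
  unfolding C_infinity_on_def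
proof
  fix n
  from assms(3) have "differentiable_upto n I f" unfolding C_infinity_on_def ..
  then show "differentiable_upto n I g"
    by (rule differentiable_upto_cong[OF assms(1), rotated]) (rule assms(2))
qed

lemma C_infinity_on_const: "C_infinity_on I (\<lambda>t. c)"
  unfolding C_infinity_on_def using differentiable_upto_const by blast

lemma C_infinity_on_add:
  assumes "open I" "C_infinity_on I f" "C_infinity_on I g"
  shows "C_infinity_on I (\<lambda>t. f t + g t)"
  using differentiable_upto_add[OF assms(1)] assms(2,3) unfolding C_infinity_on_def by blast

lemma C_infinity_on_mult:
  assumes "open I" "C_infinity_on I f" "C_infinity_on I g"
  shows "C_infinity_on I (\<lambda>t. f t * g t)"
  using differentiable_upto_mult[OF assms(1)] assms(2,3) unfolding C_infinity_on_def by blast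

lemma C_infinity_on_diff:
  assumes "open I" "C_infinity_on I f" "C_infinity_on I g"
  shows "C_infinity_on I (\<lambda>t. f t - g t)"
  using C_infinity_on_add[OF assms(1,2) C_infinity_on_mult[OF assms(1) C_infinity_on_const assms(3)],
      of "-1"] by simp

lemma C_infinity_on_sum:
  assumes "open I" "finite A" "\<And>a. a \<in> A \<Longrightarrow> C_infinity_on I (f a)"
  shows "C_infinity_on I (\<lambda>t. \<Sum>a\<in>A. f a t)"
  using assms(2,3)
  by (induction A rule: finite_induct) (auto simp: C_infinity_on_const C_infinity_on_add[OF assms(1)])

lemma C_infinity_on_inverse:
  assumes "open I" "\<And>t. t \<in> I \<Longrightarrow> f t \<noteq> 0" "C_infinity_on I f"
  shows "C_infinity_on I (\<lambda>t. inverse (f t))"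
  unfolding C_infinity_on_def
proof
  fix n
  from assms(3) have "differentiable_upto n I f" unfolding C_infinity_on_def ..
  then show "differentiable_upto n I (\<lambda>t. inverse (f t))"
    by (rule differentiable_upto_inverse[OF assms(1), rotated]) (rule assms(2))
qed

lemma C_infinity_on_exp:
  assumes "open I" "C_infinity_on I g"
  shows "C_infinity_on I (\<lambda>t. exp (g t))"
  using differentiable_upto_exp[OF assms] unfolding C_infinity_on_def by blast

lemma C_infinity_on_antiderivative:
  assumes "open I" "\<And>t. t \<in> I \<Longrightarrow> (G has_real_derivative f t) (at t)" "C_infinity_on I f"
  shows "C_infinity_on I G"
  unfolding C_infinity_on_def
proof
  fix n
  have "differentiable_upto (Suc n) I G"
    by (rule differentiable_upto_SucI[OF assms(1,2)]) (use assms(3) C_infinity_on_def in auto)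
  then show "differentiable_upto n I G" by (rule differentiable_upto_mono[rotated]) simp
qed

lemma C_infinity_on_imp_continuous_on:
  assumes "C_infinity_on I f"
  shows "continuous_on I f"
proof (rule continuous_at_imp_continuous_on, rule ballI)
  fix t assume "t \<in> I"
  then have "f differentiable (at t)"
    using assms differentiable_upto_0 unfolding C_infinity_on_def by blast
  then show "isCont f t" by (rule differentiable_imp_continuous_within)
qed

lemma iter_pd_real_Basis: "iter_pd f (replicate n (1::real)) = (deriv ^^ n) f"
proof (induction n)
  case (Suc n)
  have "pd g (1::real) = deriv g" for g
    by (rule ext) (simp add: pd_def deriv_shift_0' o_def)
  with Suc show ?case by simp
qed simp

lemma C_infinity_on_imp_smooth_on: "C_infinity_on I f \<Longrightarrow> smooth_on I f"
  unfolding smooth_on_def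
proof (intro allI impI)
  fix vs :: "real list" assume f: "C_infinity_on I f" and "set vs \<subseteq> Basis"
  then have vs: "vs = replicate (length vs) 1" by (auto intro: replicate_eqI)
  have ip: "iter_pd f vs = (deriv ^^ length vs) f" by (subst vs, rule iter_pd_real_Basis)
  have d: "\<forall>t\<in>I. (deriv ^^ length vs) f differentiable (at t)"
    using f unfolding C_infinity_on_def differentiable_upto_def by auto
  show "continuous_on I (iter_pd f vs) \<and>
        (\<forall>v\<in>Basis. \<forall>x\<in>I. (\<lambda>s. iter_pd f vs (x + s *\<^sub>R v)) differentiable at 0)"
  proof (intro conjI ballI)
    show "continuous_on I (iter_pd f vs)" unfolding ip
      by (rule continuous_at_imp_continuous_on) (use d differentiable_imp_continuous_within in blast)
    fix v :: real and x assume "v \<in> Basis" "x \<in> I"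
    then show "(\<lambda>s. iter_pd f vs (x + s *\<^sub>R v)) differentiable at 0"
      using d unfolding ip by (simp add: differentiable_at_shift_0[symmetric])
  qed
qed

lemma exists_antiderivative_open_interval:
  fixes f :: "real \<Rightarrow> real"
  assumes "continuous_on {-e<..<e} f"
  obtains G where "\<And>t. t \<in> {-e<..<e} \<Longrightarrow> (G has_real_derivative f t) (at t)"
proof -
  define G where "G x = integral {0..x} f - integral {x..0} f" for x
  have "(G has_real_derivative f t) (at t)" if t: "t \<in> {-e<..<e}" for t
  proof -
    define a where "a = (-e + min t 0) / 2"
    define b where "b = (e + max t 0) / 2"
    have ab: "-e < a" "a < t" "a < 0" "t < b" "0 < b" "b < e" using t unfolding a_def b_def by auto
    have cont: "continuous_on {a..b} f" using assms ab by (auto intro: continuous_on_subset)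
    have intg: "f integrable_on {a..x}" if "x \<le> b" for x
      by (rule integrable_continuous_real, rule continuous_on_subset[OF cont]) (use that in auto)
    define H where "H x = integral {a..x} f - integral {a..0} f" for x
    have GH: "G x = H x" if "x \<in> {a<..<b}" for x
    proof (cases "x \<ge> 0")
      case True
      then have "integral {x..0} f = 0" by (cases "x = 0") auto
      moreover have "integral {a..0} f + integral {0..x} f = integral {a..x} f"
        using Henstock_Kurzweil_Integration.integral_combine[where a=a and c=0 and b=x and f=f] True ab intg that by auto
      ultimately show ?thesis unfolding G_def H_def by simp
    next
      case False
      then have "integral {0..x} f = 0" by simp
      moreover have "integral {a..x} f + integral {x..0} f = integral {a..0} f"
        using Henstock_Kurzweil_Integration.integral_combine[where a=a and c=x and b=0 and f=f] False ab intg that by auto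
      ultimately show ?thesis unfolding G_def H_def by simp
    qed
    have "at t within {a..b} = at t"
      by (rule at_within_open_subset[of _ "{a<..<b}"]) (use ab in auto)
    then have "((\<lambda>x. integral {a..x} f) has_real_derivative f t) (at t)"
      using integral_has_real_derivative[OF cont, of t] ab by auto
    then have "(H has_real_derivative f t) (at t)"
      unfolding H_def by (auto intro!: derivative_eq_intros)
    then show ?thesis
      by (rule has_field_derivative_transform_within_open[of _ _ _ "{a<..<b}"]) (use ab GH in auto)
  qed
  then show ?thesis using that by blast
qed

text \<open>Variation of constants: u = E P with E = exp(int c) and P' = -g/E solves u' = c u - g.\<close>

lemma exists_solution_linear_ode:
  fixes c g :: "real \<Rightarrow> real" and e :: real
  defines "I \<equiv> {-e<..<e}"
  assumes c: "C_infinity_on I c" and g: "C_infinity_on I g"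
  obtains B u where "C_infinity_on I B" "\<And>t. t \<in> I \<Longrightarrow> (B has_real_derivative u t) (at t)"
    "\<And>t. t \<in> I \<Longrightarrow> (u has_real_derivative c t * u t - g t) (at t)"
proof -
  have oI: "open I" unfolding I_def by simp
  have primitive: "\<exists>G. C_infinity_on I G \<and> (\<forall>t\<in>I. (G has_real_derivative f t) (at t))"
    if "C_infinity_on I f" for f
    using exists_antiderivative_open_interval[OF C_infinity_on_imp_continuous_on[OF that[unfolded I_def]]]
      C_infinity_on_antiderivative[OF oI _ that] unfolding I_def by metis
  obtain \<gamma> where \<gamma>: "C_infinity_on I \<gamma>" "\<forall>t\<in>I. (\<gamma> has_real_derivative c t) (at t)"
    using primitive[OF c] by blast
  define E where "E t = exp (\<gamma> t)" for t
  have sE: "C_infinity_on I E" unfolding E_def using C_infinity_on_exp[OF oI \<gamma>(1)] .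
  have dE: "(E has_real_derivative c t * E t) (at t)" if "t \<in> I" for t
    unfolding E_def using DERIV_chain2[OF DERIV_exp \<gamma>(2)[rule_format, OF that]]
    by (simp add: mult.commute)
  have "C_infinity_on I (\<lambda>t. - g t * inverse (E t))"
    using C_infinity_on_diff[OF oI C_infinity_on_const
        C_infinity_on_mult[OF oI g C_infinity_on_inverse[OF oI _ sE]], of 0]
    by (simp add: E_def)
  then obtain P where P: "C_infinity_on I P" "\<forall>t\<in>I. (P has_real_derivative - g t * inverse (E t)) (at t)"
    using primitive by blast
  define u where "u t = E t * P t" for t
  have su: "C_infinity_on I u" unfolding u_def by (rule C_infinity_on_mult[OF oI sE P(1)])
  have du: "(u has_real_derivative c t * u t - g t) (at t)" if "t \<in> I" for t
  proof -
    have "(u has_real_derivative c t * E t * P t + (- g t * inverse (E t)) * E t) (at t)"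
      unfolding u_def using DERIV_mult[OF dE[OF that] P(2)[rule_format, OF that]] by simp
    moreover have "E t \<noteq> 0" unfolding E_def by simp
    ultimately show ?thesis unfolding u_def by (simp add: field_simps)
  qed
  obtain B where "C_infinity_on I B" "\<forall>t\<in>I. (B has_real_derivative u t) (at t)"
    using primitive[OF su] by blast
  then show ?thesis using that du by blast
qed

section \<open>Functions with vanishing partial derivatives\<close>

lemma zero_derivative_along_segment_imp_eq:
  fixes h :: "'a::real_normed_vector \<Rightarrow> real"
  assumes "\<And>s. s \<in> closed_segment 0 a \<Longrightarrow>
    ((\<lambda>r. h ((z + s *\<^sub>R v) + r *\<^sub>R v)) has_real_derivative 0) (at 0)"
  shows "h (z + a *\<^sub>R v) = h z"
proof -
  have "((\<lambda>s. h (z + s *\<^sub>R v)) has_real_derivative 0) (at s within closed_segment 0 a)"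
    if "s \<in> closed_segment 0 a" for s
    by (rule has_field_derivative_at_within[OF has_field_derivative_along_line[OF assms[OF that]]])
  then obtain c where "\<forall>s\<in>closed_segment 0 a. h (z + s *\<^sub>R v) = c"
    using has_field_derivative_zero_constant[OF convex_closed_segment] by blast
  moreover have "0 \<in> closed_segment 0 a" "a \<in> closed_segment 0 a" by auto
  ultimately show ?thesis by (metis add_0_right scale_zero_left)
qed

lemma zero_partials_imp_constant_on_ball:
  fixes h :: "real^'n::finite \<Rightarrow> real"
  assumes d: "\<And>y k. y \<in> ball 0 r \<Longrightarrow> ((\<lambda>s. h (y + s *\<^sub>R axis k 1)) has_real_derivative 0) (at 0)"
    and y: "y \<in> ball 0 r"
  shows "h y = h 0"
proof -
  \<comment> \<open>Move from 0 to y one coordinate at a time; every intermediate segment stays in the ball.\<close>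
  define part where "part K = (\<chi> i. if i \<in> K then y $ i else 0)" for K
  have in_ball: "part K + s *\<^sub>R axis k 1 \<in> ball 0 r" if "k \<notin> K" "\<bar>s\<bar> \<le> \<bar>y $ k\<bar>" for K k s
  proof -
    have "norm (part K + s *\<^sub>R axis k 1) \<le> norm y"
      by (rule norm_le_componentwise_cart) (use that in \<open>auto simp: part_def axis_def\<close>)
    then show ?thesis using y by simp
  qed
  have "h (part K) = h 0" if "finite K" for K
    using that
  proof (induction K rule: finite_induct)
    case empty
    have "part {} = 0" unfolding part_def by (simp add: vec_eq_iff)
    then show ?case by simp
  next
    case (insert k K)
    have "part (insert k K) = part K + (y $ k) *\<^sub>R axis k 1"
      using insert(2) by (auto simp: vec_eq_iff part_def axis_def)
    moreover have "h (part K + (y $ k) *\<^sub>R axis k 1) = h (part K)"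
    proof (rule zero_derivative_along_segment_imp_eq)
      fix s assume "s \<in> closed_segment 0 (y $ k)"
      then have "\<bar>s\<bar> \<le> \<bar>y $ k\<bar>" by (auto simp: closed_segment_eq_real_ivl split: if_splits)
      then show "((\<lambda>r. h ((part K + s *\<^sub>R axis k 1) + r *\<^sub>R axis k 1)) has_real_derivative 0) (at 0)"
        using d in_ball insert(2) by blast
    qed
    ultimately show ?case using insert.IH by simp
  qed
  moreover have "part UNIV = y" unfolding part_def by (simp add: vec_eq_iff)
  ultimately show ?thesis by (metis finite_class.finite_UNIV)
qed

definition t_dir :: "real \<times> (real^'n::finite)" where
  "t_dir = (1, 0)"

definition y_dir :: "'n::finite \<Rightarrow> real \<times> (real^'n)" where
  "y_dir j = (0, axis j 1)"

lemma t_dir_Basis: "t_dir \<in> Basis"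
  unfolding t_dir_def Basis_prod_def by auto

lemma y_dir_Basis: "y_dir j \<in> Basis"
  unfolding y_dir_def Basis_prod_def by (auto simp: axis_in_Basis_iff)

lemma add_scaleR_t_dir [simp]: "(t, y) + s *\<^sub>R t_dir = (t + s, y)"
  by (simp add: t_dir_def)

lemma add_scaleR_y_dir [simp]: "(t, y) + s *\<^sub>R y_dir j = (t, y + s *\<^sub>R axis j 1)"
  by (simp add: y_dir_def)

lemma iter_pd_t_dir_Cons: "iter_pd F (t_dir # L) (t, y) = deriv (\<lambda>s. iter_pd F L (s, y)) t"
  by (simp add: pd_def deriv_shift_0[of "\<lambda>s. iter_pd F L (s, y)" t] o_def)

lemma smooth_on_has_derivative_t:
  assumes "smooth_on S F" "set L \<subseteq> Basis" "(s, y) \<in> S"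
  shows "((\<lambda>s. iter_pd F L (s, y)) has_real_derivative iter_pd F (t_dir # L) (s, y)) (at s)"
proof -
  have "((\<lambda>r. iter_pd F L (s + r, y)) has_real_derivative iter_pd F (t_dir # L) (s, y)) (at 0)"
    using smooth_on_has_derivative_along[OF assms(1,2) t_dir_Basis assms(3)] by simp
  then show ?thesis using DERIV_shift[of "\<lambda>s. iter_pd F L (s, y)" _ 0 s] by (simp add: add.commute)
qed

lemma sum_UNIV_option:
  "(\<Sum>k\<in>(UNIV::'n::finite option set). f k) = f None + (\<Sum>m\<in>UNIV. f (Some m))"
proof -
  have "(\<Sum>k\<in>(UNIV::'n option set). f k) = f None + (\<Sum>k\<in>range Some. f k)"
    by (simp add: UNIV_option_conv)
  also have "(\<Sum>k\<in>range Some. f k) = (\<Sum>m\<in>UNIV. f (Some m))"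
    by (subst sum.reindex) (auto simp: inj_on_def)
  finally show ?thesis .
qed

lemma det_diagonal_except_row:
  fixes A :: "real^'m::finite^'m"
  assumes z: "\<And>i j. i \<noteq> j \<Longrightarrow> i \<noteq> l \<Longrightarrow> A $ i $ j = 0"
  shows "det A = (\<Prod>i\<in>UNIV. A $ i $ i)"
proof -
  let ?P = "{p. p permutes (UNIV::'m set)}"
  let ?t = "\<lambda>p. of_int (sign p) * (\<Prod>i\<in>UNIV. A $ i $ p i)"
  have "?t p = 0" if p: "p \<in> ?P - {id}" for p
  proof -
    have perm: "p permutes UNIV" and "p \<noteq> id" using p by auto
    then obtain j where j: "p j \<noteq> j" by (auto simp: fun_eq_iff)
    \<comment> \<open>A permutation moving l also moves p l.\<close>
    have "\<exists>i. p i \<noteq> i \<and> i \<noteq> l"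
    proof (cases "j = l")
      case True
      then have "p (p l) \<noteq> p l" using j injD[OF permutes_inj[OF perm]] by metis
      then show ?thesis using j True by metis
    qed (use j in blast)
    then obtain i where "p i \<noteq> i" "i \<noteq> l" by blast
    then have "(\<Prod>i\<in>UNIV. A $ i $ p i) = 0" using z[of i "p i"] by (intro prod_zero) auto
    then show ?thesis by simp
  qed
  then have "sum ?t (?P - {id}) = 0" by (intro sum.neutral) blast
  moreover have "det A = ?t id + sum ?t (?P - {id})"
    unfolding det_def by (rule sum.remove) (simp_all add: finite_permutations permutes_id)
  ultimately show ?thesis by (simp add: sign_id)
qed

lemma det_proportional_rows:
  fixes A :: "real^'m::finite^'m"
  assumes "i \<noteq> k" "\<And>j. A $ k $ j = c * A $ i $ j"
  shows "det A = 0"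
proof -
  have "A = (\<chi> r. if r = k then c *s row i A else row r A)"
    using assms by (auto simp: vec_eq_iff row_def)
  then have "det A = det (\<chi> r. if r = k then c *s row i A else row r A)" by simp
  also have "\<dots> = c * det (\<chi> r. if r = k then row i A else row r A)"
    by (rule det_row_mul)
  also have "det (\<chi> r. if r = k then row i A else row r A) = 0"
    by (rule det_identical_rows[of i k]) (use assms(1) in \<open>auto simp: row_def vec_eq_iff\<close>)
  finally show ?thesis by simp
qed

lemma det_nonzero_imp_entry_nonzero:
  fixes A :: "real^'m::finite^'m"
  assumes "det A \<noteq> 0"
  obtains i j where "A $ i $ j \<noteq> 0"
proof -
  have "\<exists>i j. A $ i $ j \<noteq> 0"
  proof (rule ccontr)
    assume "\<not> (\<exists>i j. A $ i $ j \<noteq> 0)"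
    then have "row i A = 0" for i by (simp add: row_def vec_eq_iff)
    then show False using assms det_zero_row by blast
  qed
  then show ?thesis using that by blast
qed

section \<open>Translation-invariant phases\<close>

lemma xt_None [simp]: "xt x t $ None = t"
  by (simp add: xt_def)

lemma xt_Some [simp]: "xt x t $ Some j = x $ j"
  by (simp add: xt_def)

lemma ti_phase_xt: "ti_phase \<psi> (xt x t) = (\<lambda>y. x \<bullet> y + \<psi> t y)"
  by (simp add: ti_phase_def fun_eq_iff)

lemma ti_phase_shift_axis_Some:
  "ti_phase \<psi> (X + s *\<^sub>R axis (Some m) 1) y = ti_phase \<psi> X y + s * y $ m"
proof -
  have x: "(\<chi> j. (X + s *\<^sub>R axis (Some m) 1) $ Some j) = (\<chi> j. X $ Some j) + s *\<^sub>R axis m 1"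
    by (simp add: vec_eq_iff axis_def)
  have t: "(X + s *\<^sub>R axis (Some m) 1) $ None = X $ None"
    by (simp add: axis_def)
  show ?thesis
    unfolding ti_phase_def x t by (simp add: inner_add_left inner_axis' algebra_simps)
qed

lemma ti_phase_shift_axis_None:
  "ti_phase \<psi> (X + s *\<^sub>R axis None 1) y = (\<chi> j. X $ Some j) \<bullet> y + \<psi> (X $ None + s) y"
proof -
  have "(\<chi> j. (X + s *\<^sub>R axis None 1) $ Some j) = (\<chi> j. X $ Some j)"
    by (simp add: vec_eq_iff axis_def)
  then show ?thesis by (simp add: ti_phase_def axis_def)
qed

lemma gradX_ti_phase_Some: "gradX (ti_phase \<psi>) X y $ Some m = y $ m"
  by (simp add: gradX_def pd_def ti_phase_shift_axis_Some deriv_affine)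

lemma gradX_ti_phase_None:
  "gradX (ti_phase \<psi>) X y $ None = iter_pd (case_prod \<psi>) [t_dir] (X $ None, y)"
  by (simp add: gradX_def pd_def ti_phase_shift_axis_None deriv_const_add)

lemma pd_ti_phase:
  fixes \<psi> :: "real \<Rightarrow> real^'n::finite \<Rightarrow> real"
  assumes "smooth_on (T \<times> U) (case_prod \<psi>)" "X $ None \<in> T" "y \<in> U"
  shows "pd (ti_phase \<psi> X) (axis j 1) y = X $ Some j + iter_pd (case_prod \<psi>) [y_dir j] (X $ None, y)"
proof -
  have eq: "(\<lambda>s. ti_phase \<psi> X (y + s *\<^sub>R axis j 1)) =
      (\<lambda>s. (\<chi> j. X $ Some j) \<bullet> y + s * X $ Some j + \<psi> (X $ None) (y + s *\<^sub>R axis j 1))"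
    by (simp add: ti_phase_def inner_add_right inner_axis)
  have "(\<lambda>s. iter_pd (case_prod \<psi>) [] ((X $ None, y) + s *\<^sub>R y_dir j)) differentiable at 0"
    by (rule smooth_on_differentiable_along[OF assms(1) _ y_dir_Basis]) (use assms(2,3) in auto)
  then have "(\<lambda>s. \<psi> (X $ None) (y + s *\<^sub>R axis j 1)) differentiable at 0" by simp
  then have "pd (ti_phase \<psi> X) (axis j 1) y =
      X $ Some j + deriv (\<lambda>s. \<psi> (X $ None) (y + s *\<^sub>R axis j 1)) 0"
    unfolding pd_def eq by (rule deriv_affine_add)
  then show ?thesis by (simp add: pd_def)
qed

lemma mixed_hess_ti_phase_Some:
  fixes \<psi> :: "real \<Rightarrow> real^'n::finite \<Rightarrow> real"
  assumes "smooth_on (T \<times> U) (case_prod \<psi>)" "X $ None \<in> T" "y \<in> U"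
  shows "mixed_hess (ti_phase \<psi>) X y $ Some k $ j = (if k = j then 1 else 0)"
proof -
  have "pd (ti_phase \<psi> (X + s *\<^sub>R axis (Some k) 1)) (axis j 1) y =
      (X $ Some j + iter_pd (case_prod \<psi>) [y_dir j] (X $ None, y)) + s * (if k = j then 1 else 0)" for s
    using pd_ti_phase[OF assms(1), of "X + s *\<^sub>R axis (Some k) 1"] assms(2,3)
    by (simp add: axis_def)
  then show ?thesis by (simp add: mixed_hess_def pd_def deriv_affine)
qed

lemma G0_ti_phase_None:
  fixes \<psi> :: "real \<Rightarrow> real^'n::finite \<Rightarrow> real"
  assumes "smooth_on (T \<times> U) (case_prod \<psi>)" "X $ None \<in> T" "y \<in> U"
  shows "G0 (ti_phase \<psi>) X y $ None = 1"
proof -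
  let ?M = "mixed_hess (ti_phase \<psi>) X y"
  let ?A = "(\<chi> r c. case c of Some j \<Rightarrow> ?M $ r $ j | None \<Rightarrow> axis None (1::real) $ r)
    :: real^'n option^'n option"
  have "G0 (ti_phase \<psi>) X y $ None = det ?A" by (simp add: G0_def wedge_cols_def)
  also have "det ?A = (\<Prod>i\<in>UNIV. ?A $ i $ i)"
  proof (rule det_diagonal_except_row[where l=None])
    fix i j :: "'n option" assume ij: "i \<noteq> j" "i \<noteq> None"
    then show "?A $ i $ j = 0"
      using mixed_hess_ti_phase_Some[OF assms] by (auto simp: axis_def split: option.split)
  qed
  also have "\<dots> = 1"
    using mixed_hess_ti_phase_Some[OF assms] by (intro prod.neutral ballI) (auto simp: axis_def split: option.split)
  finally show ?thesis .
qed

lemma G0_deriv_ti_phase: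
  fixes \<psi> :: "real \<Rightarrow> real^'n::finite \<Rightarrow> real"
  assumes sm: "smooth_on (T \<times> U) (case_prod \<psi>)" and "open T"
    and g: "\<And>X'. X' $ None \<in> T \<Longrightarrow> g X' = a (X' $ None)"
    and X: "X $ None \<in> T" and y0: "y0 \<in> U"
  shows "G0_deriv (ti_phase \<psi>) y0 g X = deriv a (X $ None)"
proof -
  have "\<forall>\<^sub>F s in nhds 0. X $ None + s *\<^sub>R 1 \<in> T"
    by (rule eventually_line_in_open) (use assms in auto)
  then have "\<forall>\<^sub>F s in nhds 0. g (X + s *\<^sub>R axis None 1) = a (X $ None + s)"
    by (rule eventually_mono) (use g in \<open>simp add: axis_def\<close>)
  then have "pd g (axis None 1) X = deriv (\<lambda>s. a (X $ None + s)) 0"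
    unfolding pd_def by (rule deriv_cong_ev) simp
  also have "\<dots> = deriv a (X $ None)" by (simp add: deriv_shift_0[of a] o_def)
  finally have t: "pd g (axis None 1) X = deriv a (X $ None)" .
  have "(\<lambda>s. g (X + s *\<^sub>R axis (Some m) 1)) = (\<lambda>s. a (X $ None))" for m
    using g X by (auto simp: axis_def)
  then have x: "pd g (axis (Some m) 1) X = 0" for m by (simp add: pd_def)
  show ?thesis
    unfolding G0_deriv_def sum_UNIV_option t x G0_ti_phase_None[OF sm X y0] by simp
qed

lemma pd_pd_ti_phase:
  fixes \<psi> :: "real \<Rightarrow> real^'n::finite \<Rightarrow> real"
  assumes "smooth_on (T \<times> U) (case_prod \<psi>)" "open U" "X $ None \<in> T" "y0 \<in> U"
  shows "pd (pd (ti_phase \<psi> X) (axis j 1)) (axis i 1) y0 =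
    iter_pd (case_prod \<psi>) [y_dir i, y_dir j] (X $ None, y0)"
proof -
  have "pd (pd (ti_phase \<psi> X) (axis j 1)) (axis i 1) y0 =
      pd (\<lambda>y'. X $ Some j + iter_pd (case_prod \<psi>) [y_dir j] (X $ None, y')) (axis i 1) y0"
    by (rule pd_cong[OF assms(2,4)]) (use pd_ti_phase[OF assms(1,3)] in auto)
  then show ?thesis by (simp add: pd_def deriv_const_add)
qed

lemma G0_deriv_pd_pd_ti_phase:
  fixes \<psi> :: "real \<Rightarrow> real^'n::finite \<Rightarrow> real" and y0 :: "real^'n" and i j :: 'n
  defines "f \<equiv> \<lambda>X. pd (pd (ti_phase \<psi> X) (axis j 1)) (axis i 1) y0"
  assumes sm: "smooth_on (T \<times> U) (case_prod \<psi>)" and T: "open T" and U: "open U"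
    and X: "X $ None \<in> T" and y0: "y0 \<in> U"
  shows "G0_deriv (ti_phase \<psi>) y0 f X = iter_pd (case_prod \<psi>) [t_dir, y_dir i, y_dir j] (X $ None, y0)"
    and "G0_deriv (ti_phase \<psi>) y0 (G0_deriv (ti_phase \<psi>) y0 f) X =
      iter_pd (case_prod \<psi>) [t_dir, t_dir, y_dir i, y_dir j] (X $ None, y0)"
proof -
  let ?a = "\<lambda>L \<tau>. iter_pd (case_prod \<psi>) L (\<tau>, y0)"
  have dt: "deriv (?a L) = ?a (t_dir # L)" for L
    by (rule ext) (simp only: iter_pd_t_dir_Cons)
  have D1: "G0_deriv (ti_phase \<psi>) y0 f X' = ?a [t_dir, y_dir i, y_dir j] (X' $ None)"
    if "X' $ None \<in> T" for X'
  proof -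
    have "G0_deriv (ti_phase \<psi>) y0 f X' = deriv (?a [y_dir i, y_dir j]) (X' $ None)"
      by (rule G0_deriv_ti_phase[OF sm T _ that y0]) (simp add: f_def pd_pd_ti_phase[OF sm U _ y0])
    then show ?thesis unfolding dt .
  qed
  then show "G0_deriv (ti_phase \<psi>) y0 f X = ?a [t_dir, y_dir i, y_dir j] (X $ None)"
    using X .
  show "G0_deriv (ti_phase \<psi>) y0 (G0_deriv (ti_phase \<psi>) y0 f) X = ?a [t_dir, t_dir, y_dir i, y_dir j] (X $ None)"
  proof -
    have "G0_deriv (ti_phase \<psi>) y0 (G0_deriv (ti_phase \<psi>) y0 f) X =
        deriv (?a [t_dir, y_dir i, y_dir j]) (X $ None)"
      by (rule G0_deriv_ti_phase[OF sm T _ X y0]) (rule D1)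
    then show ?thesis unfolding dt .
  qed
qed

lemma bourgain_cond_ti_phase:
  fixes \<psi> :: "real \<Rightarrow> real^'n::finite \<Rightarrow> real"
  assumes "smooth_on (T \<times> U) (case_prod \<psi>)" "open T" "open U" "X $ None \<in> T" "y0 \<in> U"
    and "bourgain_cond (ti_phase \<psi>) X y0"
  obtains C where "\<And>i j. iter_pd (case_prod \<psi>) [t_dir, t_dir, y_dir i, y_dir j] (X $ None, y0) =
    C * iter_pd (case_prod \<psi>) [t_dir, y_dir i, y_dir j] (X $ None, y0)"
  using assms(6) G0_deriv_pd_pd_ti_phase[OF assms(1-5)] that
  unfolding bourgain_cond_def Let_def by metis

lemma H2_ti_phase:
  fixes \<psi> :: "real \<Rightarrow> real^'n::finite \<Rightarrow> real"
  assumes sm: "smooth_on (T \<times> U) (case_prod \<psi>)" and T: "open T" and U: "open U"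
    and X: "X $ None \<in> T" and y0: "y0 \<in> U"
    and h2: "H2 (ti_phase \<psi>) X y0"
  shows "det (\<chi> i j. iter_pd (case_prod \<psi>) [t_dir, y_dir i, y_dir j] (X $ None, y0)) \<noteq> 0"
proof -
  let ?F = "case_prod \<psi>" and ?t = "X $ None"
  define gm where "gm m = G0 (ti_phase \<psi>) X y0 $ Some m" for m
  define h where "h y = iter_pd ?F [t_dir] (?t, y) + (\<Sum>m\<in>UNIV. y $ m * gm m)" for y
  have hh: "(\<lambda>y. gradX (ti_phase \<psi>) X y \<bullet> G0 (ti_phase \<psi>) X y0) = h"
    unfolding inner_vec_def sum_UNIV_option h_def gm_def gradX_ti_phase_Some gradX_ti_phase_None
      G0_ti_phase_None[OF sm X y0] by simp
  have pd_h: "pd h (axis j 1) y = gm j + iter_pd ?F [y_dir j, t_dir] (?t, y)" if y: "y \<in> U" for j y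
  proof -
    have "(\<Sum>m\<in>UNIV. (y + s *\<^sub>R axis j 1) $ m * gm m) =
        (\<Sum>m\<in>UNIV. y $ m * gm m + s * (if m = j then gm m else 0))" for s
      by (rule sum.cong) (auto simp: axis_def algebra_simps)
    also have "\<dots> s = (\<Sum>m\<in>UNIV. y $ m * gm m) + s * gm j" for s
      by (simp add: sum.distrib sum_distrib_left[symmetric])
    finally have eq: "(\<lambda>s. h (y + s *\<^sub>R axis j 1)) =
        (\<lambda>s. (\<Sum>m\<in>UNIV. y $ m * gm m) + s * gm j + iter_pd ?F [t_dir] ((?t, y) + s *\<^sub>R y_dir j))"
      by (simp add: h_def fun_eq_iff)
    have "(\<lambda>s. iter_pd ?F [t_dir] ((?t, y) + s *\<^sub>R y_dir j)) differentiable at 0"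
      by (rule smooth_on_differentiable_along[OF sm _ y_dir_Basis]) (use X y t_dir_Basis in auto)
    then have "pd h (axis j 1) y = gm j + deriv (\<lambda>s. iter_pd ?F [t_dir] ((?t, y) + s *\<^sub>R y_dir j)) 0"
      unfolding pd_def eq by (rule deriv_affine_add)
    then show ?thesis by (simp add: pd_def)
  qed
  have "pd (\<lambda>y'. pd h (axis j 1) y') (axis i 1) y0 = iter_pd ?F [y_dir i, y_dir j, t_dir] (?t, y0)" for i j
  proof -
    have "pd (\<lambda>y'. pd h (axis j 1) y') (axis i 1) y0 =
        pd (\<lambda>y'. gm j + iter_pd ?F [y_dir j, t_dir] (?t, y')) (axis i 1) y0"
      by (rule pd_cong[OF U y0]) (use pd_h in auto)
    then show ?thesis by (simp add: pd_def deriv_const_add)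
  qed
  moreover have "iter_pd ?F [y_dir i, y_dir j, t_dir] (?t, y0) = iter_pd ?F [t_dir, y_dir i, y_dir j] (?t, y0)"
    for i j
    using smooth_on_iter_pd_move_front[OF open_Times[OF T U] sm,
        where L = "[y_dir i, y_dir j]" and u = t_dir and L' = "[]"] X y0
    by (simp add: t_dir_Basis y_dir_Basis)
  ultimately show ?thesis using h2 unfolding H2_def hh by simp
qed

section \<open>Bourgain's condition forces a factor depending on t only\<close>

lemma bourgain_factor_has_derivative:
  fixes F :: "real \<times> (real^'n::finite) \<Rightarrow> real"
  assumes S: "open S" "smooth_on S F" "p \<in> S" and v: "v \<in> Basis"
    and factor: "\<forall>q\<in>S. \<forall>i j. iter_pd F [t_dir, t_dir, y_dir i, y_dir j] q =
                                C q * iter_pd F [t_dir, y_dir i, y_dir j] q"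
    and nz: "iter_pd F [t_dir, y_dir a, y_dir b] p \<noteq> 0"
  obtains D where "((\<lambda>s. C (p + s *\<^sub>R v)) has_real_derivative D) (at 0)"
proof -
  let ?N = "\<lambda>s. iter_pd F [t_dir, t_dir, y_dir a, y_dir b] (p + s *\<^sub>R v)"
  let ?M = "\<lambda>s. iter_pd F [t_dir, y_dir a, y_dir b] (p + s *\<^sub>R v)"
  have N: "(?N has_real_derivative iter_pd F [v, t_dir, t_dir, y_dir a, y_dir b] p) (at 0)"
    and M: "(?M has_real_derivative iter_pd F [v, t_dir, y_dir a, y_dir b] p) (at 0)"
    by (rule smooth_on_has_derivative_along[OF S(2) _ v S(3)]; simp add: t_dir_Basis y_dir_Basis)+
  have "(?M \<longlongrightarrow> ?M 0) (at 0)" using DERIV_isCont[OF M] by (simp add: isCont_def)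
  then have "\<forall>\<^sub>F s in at 0. ?M s \<noteq> 0" by (rule tendsto_imp_eventually_ne) (use nz in simp)
  then have "\<forall>\<^sub>F s in nhds 0. ?M s \<noteq> 0" unfolding eventually_nhds_conv_at using nz by simp
  then have ev: "\<forall>\<^sub>F s in nhds 0. ?N s / ?M s = C (p + s *\<^sub>R v)"
    using eventually_line_in_open[OF S(1,3), of v]
    by eventually_elim (use factor in auto)
  have "((\<lambda>s. ?N s / ?M s) has_real_derivative
      (iter_pd F [v, t_dir, t_dir, y_dir a, y_dir b] p * ?M 0 -
       ?N 0 * iter_pd F [v, t_dir, y_dir a, y_dir b] p) / (?M 0 * ?M 0)) (at 0)"
    by (rule DERIV_divide[OF N M]) (use nz in simp)
  then show ?thesis using DERIV_cong_ev[OF refl ev refl] by (simp add: that)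
qed

lemma bourgain_factor_derivative_relation:
  fixes F :: "real \<times> (real^'n::finite) \<Rightarrow> real"
  assumes S: "open S" "smooth_on S F" "p \<in> S" and v: "v \<in> Basis"
    and factor: "\<forall>q\<in>S. \<forall>i j. iter_pd F [t_dir, t_dir, y_dir i, y_dir j] q =
                                C q * iter_pd F [t_dir, y_dir i, y_dir j] q"
    and D: "((\<lambda>s. C (p + s *\<^sub>R v)) has_real_derivative D) (at 0)"
  shows "iter_pd F [v, t_dir, t_dir, y_dir i, y_dir j] p =
    D * iter_pd F [t_dir, y_dir i, y_dir j] p + C p * iter_pd F [v, t_dir, y_dir i, y_dir j] p"
proof -
  let ?N = "\<lambda>s. iter_pd F [t_dir, t_dir, y_dir i, y_dir j] (p + s *\<^sub>R v)"
  let ?M = "\<lambda>s. iter_pd F [t_dir, y_dir i, y_dir j] (p + s *\<^sub>R v)"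
  have N: "(?N has_real_derivative iter_pd F [v, t_dir, t_dir, y_dir i, y_dir j] p) (at 0)"
    and M: "(?M has_real_derivative iter_pd F [v, t_dir, y_dir i, y_dir j] p) (at 0)"
    by (rule smooth_on_has_derivative_along[OF S(2) _ v S(3)]; simp add: t_dir_Basis y_dir_Basis)+
  have "((\<lambda>s. C (p + s *\<^sub>R v) * ?M s) has_real_derivative
      D * iter_pd F [t_dir, y_dir i, y_dir j] p + C p * iter_pd F [v, t_dir, y_dir i, y_dir j] p) (at 0)"
    using DERIV_mult[OF D M] by (simp add: mult.commute)
  moreover have ev: "\<forall>\<^sub>F s in nhds 0. C (p + s *\<^sub>R v) * ?M s = ?N s"
    using eventually_line_in_open[OF S(1,3), of v] by (rule eventually_mono) (use factor in auto)
  ultimately have "(?N has_real_derivative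
      D * iter_pd F [t_dir, y_dir i, y_dir j] p + C p * iter_pd F [v, t_dir, y_dir i, y_dir j] p) (at 0)"
    using DERIV_cong_ev[OF refl ev refl] by simp
  then show ?thesis by (rule DERIV_unique[OF N])
qed

lemma bourgain_factor_partials_relation:
  fixes F :: "real \<times> (real^'n::finite) \<Rightarrow> real"
  assumes S: "open S" "smooth_on S F" "p \<in> S"
    and factor: "\<forall>q\<in>S. \<forall>i j. iter_pd F [t_dir, t_dir, y_dir i, y_dir j] q =
                                C q * iter_pd F [t_dir, y_dir i, y_dir j] q"
    and D: "\<And>k. ((\<lambda>s. C (p + s *\<^sub>R y_dir k)) has_real_derivative D k) (at 0)"
  shows "D k * iter_pd F [t_dir, y_dir i, y_dir j] p = D i * iter_pd F [t_dir, y_dir k, y_dir j] p"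
proof -
  have front: "iter_pd F (L @ u # L') p = iter_pd F (u # L @ L') p"
    if "set (L @ u # L') \<subseteq> Basis" for L u L'
    by (rule smooth_on_iter_pd_move_front[OF S(1,2) that S(3)])
  have sym: "iter_pd F (y_dir k # L @ [y_dir i, y_dir j]) p = iter_pd F (y_dir i # L @ [y_dir k, y_dir j]) p"
    if "set L \<subseteq> Basis" for L
    using front[of "y_dir k # L" "y_dir i" "[y_dir j]"] front[of "y_dir i # L" "y_dir k" "[y_dir j]"]
      front[of "[y_dir k]" "y_dir i" "L @ [y_dir j]"] that by (simp add: y_dir_Basis del: iter_pd.simps)
  have "iter_pd F [y_dir k, t_dir, t_dir, y_dir i, y_dir j] p =
        iter_pd F [y_dir i, t_dir, t_dir, y_dir k, y_dir j] p"
       "iter_pd F [y_dir k, t_dir, y_dir i, y_dir j] p = iter_pd F [y_dir i, t_dir, y_dir k, y_dir j] p"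
    using sym[of "[t_dir, t_dir]"] sym[of "[t_dir]"] by (simp_all add: t_dir_Basis del: iter_pd.simps)
  then show ?thesis
    using bourgain_factor_derivative_relation[OF S y_dir_Basis factor D, of k i j]
      bourgain_factor_derivative_relation[OF S y_dir_Basis factor D, of i k j]
    by simp
qed

lemma exists_ne_if_card_ge_2:
  fixes i :: "'n::finite"
  assumes "CARD('n) \<ge> 2"
  obtains k where "k \<noteq> i"
proof -
  have "\<exists>k::'n. k \<noteq> i"
  proof (rule ccontr)
    assume "\<nexists>k::'n. k \<noteq> i"
    then have "(UNIV::'n set) = {i}" by auto
    then have "CARD('n) = card {i}" by (simp only:)
    then show False using assms by simp
  qed
  then show ?thesis using that by blast
qed

lemma bourgain_factor_has_derivative_y_zero:
  fixes F :: "real \<times> (real^'n::finite) \<Rightarrow> real"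
  assumes card: "CARD('n) \<ge> 2"
    and S: "open S" "smooth_on S F" "p \<in> S"
    and factor: "\<forall>q\<in>S. \<forall>i j. iter_pd F [t_dir, t_dir, y_dir i, y_dir j] q =
                                C q * iter_pd F [t_dir, y_dir i, y_dir j] q"
    and nondeg: "det (\<chi> i j. iter_pd F [t_dir, y_dir i, y_dir j] p) \<noteq> 0"
  shows "((\<lambda>s. C (p + s *\<^sub>R y_dir k)) has_real_derivative 0) (at 0)"
proof -
  let ?A = "\<chi> i j. iter_pd F [t_dir, y_dir i, y_dir j] p"
  obtain a b where "?A $ a $ b \<noteq> 0" using det_nonzero_imp_entry_nonzero[OF nondeg] .
  then have nz: "iter_pd F [t_dir, y_dir a, y_dir b] p \<noteq> 0" by simp
  have "\<exists>D. ((\<lambda>s. C (p + s *\<^sub>R y_dir k)) has_real_derivative D) (at 0)" for k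
    by (rule bourgain_factor_has_derivative[OF S y_dir_Basis factor nz]) blast
  then obtain D where D: "\<And>k. ((\<lambda>s. C (p + s *\<^sub>R y_dir k)) has_real_derivative D k) (at 0)"
    by metis
  have "D i = 0" for i
  proof (rule ccontr)
    assume Di: "D i \<noteq> 0"
    obtain k where k: "k \<noteq> i" using exists_ne_if_card_ge_2[OF card] .
    have "det ?A = 0"
      by (rule det_proportional_rows[OF k[symmetric], of _ "D k / D i"])
        (use bourgain_factor_partials_relation[OF S factor D, of k] Di in \<open>simp add: field_simps\<close>)
    then show False using nondeg by simp
  qed
  then show ?thesis using D by simp
qed

lemma bourgain_factor_independent_of_y:
  fixes F :: "real \<times> (real^'n::finite) \<Rightarrow> real"
  assumes card: "CARD('n) \<ge> 2" and T: "open T" and sm: "smooth_on (T \<times> ball 0 r) F"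
    and factor: "\<forall>q\<in>T \<times> ball 0 r. \<forall>i j. iter_pd F [t_dir, t_dir, y_dir i, y_dir j] q =
                                            C q * iter_pd F [t_dir, y_dir i, y_dir j] q"
    and nondeg: "\<And>y'. y' \<in> ball 0 r \<Longrightarrow> det (\<chi> i j. iter_pd F [t_dir, y_dir i, y_dir j] (t, y')) \<noteq> 0"
    and t: "t \<in> T" and y: "y \<in> ball 0 r"
  shows "C (t, y) = C (t, 0)"
proof (rule zero_partials_imp_constant_on_ball[where h = "\<lambda>y. C (t, y)", OF _ y])
  fix y' :: "real^'n" and k assume y': "y' \<in> ball 0 r"
  have "((\<lambda>s. C ((t, y') + s *\<^sub>R y_dir k)) has_real_derivative 0) (at 0)"
    by (rule bourgain_factor_has_derivative_y_zero[OF card open_Times[OF T open_ball] sm _ factor])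
      (use t y' nondeg in auto)
  then show "((\<lambda>s. C (t, y' + s *\<^sub>R axis k 1)) has_real_derivative 0) (at 0)" by simp
qed

lemma C_infinity_on_iter_pd_slice:
  fixes F :: "real \<times> (real^'n::finite) \<Rightarrow> real"
  assumes "smooth_on (T \<times> U) F" "y \<in> U" "set L \<subseteq> Basis"
  shows "C_infinity_on T (\<lambda>t. iter_pd F L (t, y))"
proof -
  have dn: "(deriv ^^ n) (\<lambda>t. iter_pd F L (t, y)) = (\<lambda>t. iter_pd F (replicate n t_dir @ L) (t, y))" for n
  proof (induction n)
    case (Suc n)
    show ?case
      by (rule ext) (simp only: funpow.simps comp_apply Suc replicate_Suc append_Cons iter_pd_t_dir_Cons)
  qed simp
  show ?thesis unfolding C_infinity_on_def differentiable_upto_def dn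
  proof (intro allI impI ballI)
    fix k t assume "t \<in> T"
    then have "(\<lambda>s. iter_pd F (replicate k t_dir @ L) ((t, y) + s *\<^sub>R t_dir)) differentiable at 0"
      using assms t_dir_Basis by (intro smooth_on_differentiable_along[OF assms(1) _ t_dir_Basis]) auto
    then show "(\<lambda>t. iter_pd F (replicate k t_dir @ L) (t, y)) differentiable at t"
      by (subst differentiable_at_shift_0) simp
  qed
qed

text \<open>The factor is the ratio of Frobenius products of d_t^2 Hess_y F and d_t Hess_y F with
  the invertible matrix d_t Hess_y F, hence smooth.\<close>

lemma C_infinity_on_bourgain_factor:
  fixes F :: "real \<times> (real^'n::finite) \<Rightarrow> real"
  assumes T: "open T" and sm: "smooth_on (T \<times> U) F" and y: "y \<in> U"
    and factor: "\<And>t i j. t \<in> T \<Longrightarrow> iter_pd F [t_dir, t_dir, y_dir i, y_dir j] (t, y) =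
                                      c t * iter_pd F [t_dir, y_dir i, y_dir j] (t, y)"
    and nondeg: "\<And>t. t \<in> T \<Longrightarrow> det (\<chi> i j. iter_pd F [t_dir, y_dir i, y_dir j] (t, y)) \<noteq> 0"
  shows "C_infinity_on T c"
proof -
  let ?A = "\<lambda>t i j. iter_pd F [t_dir, y_dir i, y_dir j] (t, y)"
  let ?B = "\<lambda>t i j. iter_pd F [t_dir, t_dir, y_dir i, y_dir j] (t, y)"
  define num where "num t = (\<Sum>i\<in>UNIV. \<Sum>j\<in>UNIV. ?B t i j * ?A t i j)" for t
  define den where "den t = (\<Sum>i\<in>UNIV. \<Sum>j\<in>UNIV. ?A t i j * ?A t i j)" for t
  have A: "C_infinity_on T (\<lambda>t. ?A t i j)" and B: "C_infinity_on T (\<lambda>t. ?B t i j)" for i j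
    by (rule C_infinity_on_iter_pd_slice[OF sm y]; simp add: t_dir_Basis y_dir_Basis)+
  have num: "C_infinity_on T num"
    unfolding num_def by (intro C_infinity_on_sum[OF T] C_infinity_on_mult[OF T] A B) simp_all
  have den: "C_infinity_on T den"
    unfolding den_def by (intro C_infinity_on_sum[OF T] C_infinity_on_mult[OF T] A) simp_all
  have den_nz: "den t \<noteq> 0" if t: "t \<in> T" for t
  proof
    assume "den t = 0"
    then have "(\<Sum>j\<in>UNIV. ?A t i j * ?A t i j) = 0" for i
      unfolding den_def by (subst (asm) sum_nonneg_eq_0_iff) (auto intro: sum_nonneg)
    then have "(\<chi> i j. ?A t i j) $ i $ j = 0" for i j
      by (subst (asm) sum_nonneg_eq_0_iff) auto
    then show False using det_nonzero_imp_entry_nonzero[OF nondeg[OF t]] by blast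
  qed
  have "num t * inverse (den t) = c t" if t: "t \<in> T" for t
  proof -
    have "num t = c t * den t"
      unfolding num_def den_def using factor[OF t] by (simp add: sum_distrib_left mult.assoc)
    then show ?thesis using den_nz[OF t] by simp
  qed
  then show ?thesis
    using C_infinity_on_cong[OF T _ C_infinity_on_mult[OF T num C_infinity_on_inverse[OF T den_nz den]]]
    by blast
qed

lemma exists_bourgain_factor_of_t:
  fixes F :: "real \<times> (real^'n::finite) \<Rightarrow> real"
  assumes card: "CARD('n) \<ge> 2" and T: "open T" and r: "r > 0" and sm: "smooth_on (T \<times> ball 0 r) F"
    and nondeg: "\<And>t y. t \<in> T \<Longrightarrow> y \<in> ball 0 r \<Longrightarrow>
                   det (\<chi> i j. iter_pd F [t_dir, y_dir i, y_dir j] (t, y)) \<noteq> 0"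
    and bc: "\<And>t y. t \<in> T \<Longrightarrow> y \<in> ball 0 r \<Longrightarrow> \<exists>C. \<forall>i j.
               iter_pd F [t_dir, t_dir, y_dir i, y_dir j] (t, y) = C * iter_pd F [t_dir, y_dir i, y_dir j] (t, y)"
  obtains c where "C_infinity_on T c"
    "\<And>t y i j. t \<in> T \<Longrightarrow> y \<in> ball 0 r \<Longrightarrow>
       iter_pd F [t_dir, t_dir, y_dir i, y_dir j] (t, y) = c t * iter_pd F [t_dir, y_dir i, y_dir j] (t, y)"
proof -
  have "\<forall>q\<in>T \<times> ball 0 r. \<exists>C. \<forall>i j. iter_pd F [t_dir, t_dir, y_dir i, y_dir j] q =
                                     C * iter_pd F [t_dir, y_dir i, y_dir j] q"
    using bc by auto
  then obtain C where C: "\<forall>q\<in>T \<times> ball 0 r. \<forall>i j. iter_pd F [t_dir, t_dir, y_dir i, y_dir j] q =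
                                                  C q * iter_pd F [t_dir, y_dir i, y_dir j] q"
    by (rule bchoice[THEN exE]) blast
  define c where "c t = C (t, 0)" for t
  have factor: "iter_pd F [t_dir, t_dir, y_dir i, y_dir j] (t, y) = c t * iter_pd F [t_dir, y_dir i, y_dir j] (t, y)"
    if "t \<in> T" "y \<in> ball 0 r" for t y i j
    using C bourgain_factor_independent_of_y[OF card T sm C _ that] nondeg that unfolding c_def by auto
  have "C_infinity_on T c"
    by (rule C_infinity_on_bourgain_factor[OF T sm, where y = 0]) (use factor nondeg r in auto)
  then show ?thesis by (rule that) (rule factor)
qed

lemma dt_grad_y_remainder_independent_of_y:
  fixes F :: "real \<times> (real^'n::finite) \<Rightarrow> real"
  assumes T: "open T" and sm: "smooth_on (T \<times> ball 0 r) F" and t: "t \<in> T" and y: "y \<in> ball 0 r"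
    and factor: "\<And>y' i j. y' \<in> ball 0 r \<Longrightarrow> iter_pd F [t_dir, t_dir, y_dir i, y_dir j] (t, y') =
                                               c * iter_pd F [t_dir, y_dir i, y_dir j] (t, y')"
  shows "iter_pd F [t_dir, t_dir, y_dir j] (t, y) - c * iter_pd F [t_dir, y_dir j] (t, y) =
         iter_pd F [t_dir, t_dir, y_dir j] (t, 0) - c * iter_pd F [t_dir, y_dir j] (t, 0)"
proof (rule zero_partials_imp_constant_on_ball[where
      h = "\<lambda>y. iter_pd F [t_dir, t_dir, y_dir j] (t, y) - c * iter_pd F [t_dir, y_dir j] (t, y)", OF _ y])
  fix y' :: "real^'n" and k assume y': "y' \<in> ball 0 r"
  have p: "(t, y') \<in> T \<times> ball 0 r" using t y' by simp
  have front: "iter_pd F (L @ u # L') (t, y') = iter_pd F (u # L @ L') (t, y')"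
    if "set (L @ u # L') \<subseteq> Basis" for L u L'
    by (rule smooth_on_iter_pd_move_front[OF open_Times[OF T open_ball] sm that p])
  have "((\<lambda>s. iter_pd F [t_dir, t_dir, y_dir j] ((t, y') + s *\<^sub>R y_dir k) -
             c * iter_pd F [t_dir, y_dir j] ((t, y') + s *\<^sub>R y_dir k)) has_real_derivative
      iter_pd F [y_dir k, t_dir, t_dir, y_dir j] (t, y') - c * iter_pd F [y_dir k, t_dir, y_dir j] (t, y')) (at 0)"
    by (intro DERIV_diff DERIV_cmult smooth_on_has_derivative_along[OF sm _ y_dir_Basis p])
      (simp_all add: t_dir_Basis y_dir_Basis)
  moreover have "iter_pd F [y_dir k, t_dir, t_dir, y_dir j] (t, y') - c * iter_pd F [y_dir k, t_dir, y_dir j] (t, y') = 0"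
    using front[of "[t_dir, t_dir]" "y_dir k" "[y_dir j]"] front[of "[t_dir]" "y_dir k" "[y_dir j]"]
      factor[OF y', of k j]
    by (simp add: t_dir_Basis y_dir_Basis del: iter_pd.simps)
  ultimately show "((\<lambda>s. iter_pd F [t_dir, t_dir, y_dir j] (t, y' + s *\<^sub>R axis k 1) -
      c * iter_pd F [t_dir, y_dir j] (t, y' + s *\<^sub>R axis k 1)) has_real_derivative 0) (at 0)"
    by simp
qed

section \<open>The normalising translation\<close>

lemma exists_translation_solving_ode:
  fixes F :: "real \<times> (real^'n::finite) \<Rightarrow> real" and e :: real
  defines "I \<equiv> {-e<..<e}"
  assumes sm: "smooth_on (I \<times> U) F" and y0: "y0 \<in> U" and c: "C_infinity_on I c"
  obtains B :: "real \<Rightarrow> real^'n" and u :: "'n \<Rightarrow> real \<Rightarrow> real" where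
    "\<And>j. C_infinity_on I (\<lambda>t. B t $ j)"
    "\<And>j t. t \<in> I \<Longrightarrow> ((\<lambda>s. B s $ j) has_real_derivative u j t) (at t)"
    "\<And>j t. t \<in> I \<Longrightarrow> (u j has_real_derivative c t * u j t -
        (iter_pd F [t_dir, t_dir, y_dir j] (t, y0) - c t * iter_pd F [t_dir, y_dir j] (t, y0))) (at t)"
proof -
  define g where "g j t = iter_pd F [t_dir, t_dir, y_dir j] (t, y0) - c t * iter_pd F [t_dir, y_dir j] (t, y0)"
    for j t
  have "\<exists>b u. C_infinity_on I b \<and> (\<forall>t\<in>I. (b has_real_derivative u t) (at t)) \<and>
      (\<forall>t\<in>I. (u has_real_derivative c t * u t - g j t) (at t))" for j
  proof -
    have "C_infinity_on I (g j)"
      unfolding I_def g_def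
      by (intro C_infinity_on_diff C_infinity_on_mult C_infinity_on_iter_pd_slice[OF sm[unfolded I_def] y0]
          c[unfolded I_def]) (simp_all add: t_dir_Basis y_dir_Basis)
    then obtain b u where "C_infinity_on I b" "\<And>t. t \<in> I \<Longrightarrow> (b has_real_derivative u t) (at t)"
      "\<And>t. t \<in> I \<Longrightarrow> (u has_real_derivative c t * u t - g j t) (at t)"
      using exists_solution_linear_ode[OF c[unfolded I_def], of "g j"] unfolding I_def by metis
    then show ?thesis by blast
  qed
  then obtain b where "\<forall>j. \<exists>u. C_infinity_on I (b j) \<and> (\<forall>t\<in>I. (b j has_real_derivative u t) (at t)) \<and>
      (\<forall>t\<in>I. (u has_real_derivative c t * u t - g j t) (at t))"
    by (metis choice)
  then obtain u where "\<forall>j. C_infinity_on I (b j) \<and> (\<forall>t\<in>I. (b j has_real_derivative u j t) (at t)) \<and>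
      (\<forall>t\<in>I. (u j has_real_derivative c t * u j t - g j t) (at t))"
    by (metis choice)
  then show ?thesis by (intro that[of "\<lambda>t. \<chi> j. b j t" u]) (auto simp: g_def)
qed

lemma translated_phase_ode:
  fixes \<psi> :: "real \<Rightarrow> real^'n::finite \<Rightarrow> real" and B :: "real \<Rightarrow> real^'n"
  assumes sm: "smooth_on (T \<times> U) (case_prod \<psi>)" and T: "open T" and t: "t \<in> T" and y: "y \<in> U"
    and B': "\<And>s. s \<in> T \<Longrightarrow> ((\<lambda>s. B s $ j) has_real_derivative u s) (at s)"
    and u': "(u has_real_derivative c * u t - g) (at t)"
    and remainder: "iter_pd (case_prod \<psi>) [t_dir, t_dir, y_dir j] (t, y) -
                    c * iter_pd (case_prod \<psi>) [t_dir, y_dir j] (t, y) = g"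
  shows "deriv (deriv (\<lambda>s. pd (\<lambda>y'. B s \<bullet> y' + \<psi> s y') (axis j 1) y)) t =
    c * deriv (\<lambda>s. pd (\<lambda>y'. B s \<bullet> y' + \<psi> s y') (axis j 1) y) t"
proof -
  let ?F = "case_prod \<psi>"
  let ?Q = "\<lambda>s. pd (\<lambda>y'. B s \<bullet> y' + \<psi> s y') (axis j 1) y"
  let ?Q' = "\<lambda>s. u s + iter_pd ?F [t_dir, y_dir j] (s, y)"
  have dF: "((\<lambda>s. iter_pd ?F L (s, y)) has_real_derivative iter_pd ?F (t_dir # L) (s, y)) (at s)"
    if "s \<in> T" "set L \<subseteq> Basis" for s L
    by (rule smooth_on_has_derivative_t[OF sm that(2)]) (use that y in simp)
  have Q: "?Q s = B s $ j + iter_pd ?F [y_dir j] (s, y)" if "s \<in> T" for s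
    using pd_ti_phase[OF sm, of "xt (B s) s" y j] that y by (simp add: ti_phase_xt)
  have Q': "deriv ?Q s = ?Q' s" if s: "s \<in> T" for s
  proof -
    have ev: "\<forall>\<^sub>F x in nhds s. ?Q x = B x $ j + iter_pd ?F [y_dir j] (x, y)"
      using eventually_nhds_in_open[OF T s] by (rule eventually_mono) (use Q in auto)
    have "((\<lambda>x. B x $ j + iter_pd ?F [y_dir j] (x, y)) has_real_derivative ?Q' s) (at s)"
      by (rule DERIV_add[OF B'[OF s] dF[OF s]]) (simp add: y_dir_Basis)
    then have "(?Q has_real_derivative ?Q' s) (at s)"
      using DERIV_cong_ev[OF refl ev refl] by simp
    then show ?thesis by (rule DERIV_imp_deriv)
  qed
  have "\<forall>\<^sub>F x in nhds t. deriv ?Q x = ?Q' x"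
    using eventually_nhds_in_open[OF T t] by (rule eventually_mono) (use Q' in auto)
  then have "deriv (deriv ?Q) t = deriv ?Q' t" by (rule deriv_cong_ev) simp
  also have "\<dots> = (c * u t - g) + iter_pd ?F [t_dir, t_dir, y_dir j] (t, y)"
    by (rule DERIV_imp_deriv, rule DERIV_add[OF u' dF[OF t]]) (simp add: t_dir_Basis y_dir_Basis)
  also have "\<dots> = c * ?Q' t" using remainder by (simp add: algebra_simps)
  finally show ?thesis using Q'[OF t] by simp
qed

theorem mainTheorem11:
  fixes \<psi> :: "real \<Rightarrow> real^'n::finite \<Rightarrow> real"
    and \<epsilon>0 :: real
  assumes d3: "CARD('n) \<ge> 2"
    and eps: "\<epsilon>0 > 0"
    and smooth: "smooth_on ({-\<epsilon>0<..<\<epsilon>0} \<times> ball 0 \<epsilon>0) (\<lambda>(t, y). \<psi> t y)"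
    and psi0: "\<forall>y\<in>ball 0 \<epsilon>0. \<psi> 0 y = 0"
    and hyp1: "\<forall>x\<in>ball 0 \<epsilon>0. \<forall>t\<in>{-\<epsilon>0<..<\<epsilon>0}. \<forall>y\<in>ball 0 \<epsilon>0.
                 H1 (ti_phase \<psi>) (xt x t) y"
    and hyp2: "\<forall>x\<in>ball 0 \<epsilon>0. \<forall>t\<in>{-\<epsilon>0<..<\<epsilon>0}. \<forall>y0\<in>ball 0 \<epsilon>0.
                 H2 (ti_phase \<psi>) (xt x t) y0"
    and bourgain: "\<forall>x\<in>ball 0 \<epsilon>0. \<forall>t\<in>{-\<epsilon>0<..<\<epsilon>0}. \<forall>y0\<in>ball 0 \<epsilon>0.
                 bourgain_cond (ti_phase \<psi>) (xt x t) y0"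
  shows "\<exists>(c :: real \<Rightarrow> real) (B :: real \<Rightarrow> real^'n).
           smooth_on {-\<epsilon>0<..<\<epsilon>0} c \<and>
           (\<forall>j. smooth_on {-\<epsilon>0<..<\<epsilon>0} (\<lambda>t. B t $ j)) \<and>
           (let \<psi>' = (\<lambda>t y. B t \<bullet> y + \<psi> t y) in
              (\<forall>x t y. ti_phase \<psi> (xt (x + B t) t) y = x \<bullet> y + \<psi>' t y) \<and>
              (\<forall>t\<in>{-\<epsilon>0<..<\<epsilon>0}. \<forall>y\<in>ball 0 \<epsilon>0. \<forall>j.
                 deriv (deriv (\<lambda>s. pd (\<lambda>y'. \<psi>' s y') (axis j 1) y)) t
                   = c t * deriv (\<lambda>s. pd (\<lambda>y'. \<psi>' s y') (axis j 1) y) t))"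
proof -
  let ?I = "{-\<epsilon>0<..<\<epsilon>0}" and ?F = "case_prod \<psi>"
  have I: "open ?I" and z: "0 \<in> ball (0::real^'n) \<epsilon>0" using eps by auto
  have nondeg: "det (\<chi> i j. iter_pd ?F [t_dir, y_dir i, y_dir j] (t, y)) \<noteq> 0"
    if "t \<in> ?I" "y \<in> ball 0 \<epsilon>0" for t y
    using H2_ti_phase[OF smooth I open_ball, of "xt 0 t" y] hyp2 z that by simp
  have bc: "\<exists>C. \<forall>i j. iter_pd ?F [t_dir, t_dir, y_dir i, y_dir j] (t, y) =
                      C * iter_pd ?F [t_dir, y_dir i, y_dir j] (t, y)"
    if "t \<in> ?I" "y \<in> ball 0 \<epsilon>0" for t y
    by (rule bourgain_cond_ti_phase[OF smooth I open_ball, of "xt 0 t" y]) (use bourgain z that in auto)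
  obtain c where c: "C_infinity_on ?I c" and factor: "\<And>t y i j. t \<in> ?I \<Longrightarrow> y \<in> ball 0 \<epsilon>0 \<Longrightarrow>
      iter_pd ?F [t_dir, t_dir, y_dir i, y_dir j] (t, y) = c t * iter_pd ?F [t_dir, y_dir i, y_dir j] (t, y)"
    using exists_bourgain_factor_of_t[OF d3 I eps smooth nondeg bc] by blast
  obtain B u where B: "\<And>j. C_infinity_on ?I (\<lambda>t. B t $ j)"
    "\<And>j t. t \<in> ?I \<Longrightarrow> ((\<lambda>s. B s $ j) has_real_derivative u j t) (at t)"
    "\<And>j t. t \<in> ?I \<Longrightarrow> (u j has_real_derivative c t * u j t -
        (iter_pd ?F [t_dir, t_dir, y_dir j] (t, 0) - c t * iter_pd ?F [t_dir, y_dir j] (t, 0))) (at t)"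
    using exists_translation_solving_ode[OF smooth z c] by blast
  have "deriv (deriv (\<lambda>s. pd (\<lambda>y'. B s \<bullet> y' + \<psi> s y') (axis j 1) y)) t =
      c t * deriv (\<lambda>s. pd (\<lambda>y'. B s \<bullet> y' + \<psi> s y') (axis j 1) y) t"
    if "t \<in> ?I" "y \<in> ball 0 \<epsilon>0" for t y j
    by (rule translated_phase_ode[OF smooth I that B(2) B(3)[OF that(1)]])
      (use dt_grad_y_remainder_independent_of_y[OF I smooth that factor[OF that(1)]] in auto)
  then show ?thesis
    using B(1) C_infinity_on_imp_smooth_on[OF c]
    by (intro exI[of _ c] exI[of _ B]) (simp add: C_infinity_on_imp_smooth_on ti_phase_xt inner_add_left Let_def)
qed

end
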